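(* Let $m\ge2$, $q\ge 2$ be integers, let $\Omega$ be a nonempty closed subset of $\Sigma_m$ and $\mu$ a Borel probability measure on $\Omega$. Let $\mathbb{P}_\mu$ be the Borel probability measure on $\Sigma_m$ (supported on $X_\Omega$) determined on cylinders by $$\mathbb{P}_\mu[u] := \prod_{i\le |u|,\ q\nmid i} \mu[u|J_i],$$ and let $$s(\Omega,\mu) := (q-1)^2\sum_{k=1}^\infty \frac{H_m^\mu(\alpha_k)}{q^{k+1}}.$$ Then for $\mathbb{P}_\mu$-a.e. $x\in X_\Omega$, $$\lim_{n\to\infty}\frac{-\log_m \mathbb{P}_\mu[x_1^n]}{n} = s(\Omega,\mu).$$ Consequently $\dim_H(\mathbb{P}_\mu)=s(\Omega,\mu)$ and $\dim_H(X_\Omega)\ge s(\Omega,\mu)$.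
   Context: $\Sigma_m=\{0,\dots,m-1\}^{\mathbb N}$ with metric $\varrho((x_k),(y_k)) = m^{-\min\{n:\ x_n\ne y_n\}+1}$. $X_\Omega := \{x\in\Sigma_m:\ (x_{iq^\ell})_{\ell\ge0}\in\Omega \text{ for all } i\ge1,\ q\nmid i\}$. For a finite word $u$, $[u]$ is the cylinder of sequences beginning with $u$; $x_1^n=x_1\cdots x_n$. For $q\nmid i$, $J_i=\{q^r i\}_{r\ge 0}$, and for a word $u$ of length $|u|\ge i$, $u|J_i = u_iu_{qi}\cdots u_{q^ri}$ where $q^ri\le|u|<q^{r+1}i$. $\alpha_k=\{\Omega\cap[u]:\ u\in\{0,\dots,m-1\}^k,\ \Omega\cap[u]\ne\emptyset\}$, and $H_m^\mu(\alpha)=-\sum_{C\in\alpha}\mu(C)\log_m\mu(C)$. The Hausdorff dimension of a measure is $\dim_H(\mathbb{P})=\inf\{\dim_H F:\ F \text{ Borel},\ \mathbb{P}(F)=1\}$. *)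

theory Defs
  imports "HOL-Probability.Probability"
begin

text \<open>Points of the full shift are sequences indexed from 1: x_1, x_2, ...
  Represented as functions nat => nat with the dummy value x 0 = 0.
  Finite words u = u_1 ... u_k are lists, u_j = u ! (j - 1).\<close>

definition Sigma_sh :: "nat \<Rightarrow> (nat \<Rightarrow> nat) set" where
  "Sigma_sh m = {x. x 0 = 0 \<and> (\<forall>n. x n < m)}"

definition rho :: "nat \<Rightarrow> (nat \<Rightarrow> nat) \<Rightarrow> (nat \<Rightarrow> nat) \<Rightarrow> real" where
  "rho m x y = (if x = y then 0
     else real m powr (- real (LEAST n. x n \<noteq> y n) + 1))"

definition Sopen :: "nat \<Rightarrow> (nat \<Rightarrow> nat) set \<Rightarrow> bool" where
  "Sopen m U \<longleftrightarrow> U \<subseteq> Sigma_sh m \<and>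
     (\<forall>x\<in>U. \<exists>e>0. \<forall>y\<in>Sigma_sh m. rho m x y < e \<longrightarrow> y \<in> U)"

definition Sclosed :: "nat \<Rightarrow> (nat \<Rightarrow> nat) set \<Rightarrow> bool" where
  "Sclosed m F \<longleftrightarrow> F \<subseteq> Sigma_sh m \<and> Sopen m (Sigma_sh m - F)"

definition borel_Sigma :: "nat \<Rightarrow> (nat \<Rightarrow> nat) measure" where
  "borel_Sigma m = sigma (Sigma_sh m) {U. Sopen m U}"

definition cyl :: "nat \<Rightarrow> nat list \<Rightarrow> (nat \<Rightarrow> nat) set" where
  "cyl m u = {x \<in> Sigma_sh m. \<forall>j\<in>{1..length u}. x j = u ! (j - 1)}"

definition words :: "nat \<Rightarrow> nat \<Rightarrow> nat list set" where
  "words m k = {u. length u = k \<and> (\<forall>a\<in>set u. a < m)}"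

definition prefix_word :: "(nat \<Rightarrow> nat) \<Rightarrow> nat \<Rightarrow> nat list" where
  "prefix_word x n = map x [1..<n+1]"

text \<open>u|J_i = u_i u_{qi} ... u_{q^r i} with q^r i <= |u| < q^(r+1) i (for q >= 2, r <= |u|).\<close>
definition restrJ :: "nat \<Rightarrow> nat \<Rightarrow> nat list \<Rightarrow> nat list" where
  "restrJ q i u = map (\<lambda>r. u ! (q ^ r * i - 1))
      (filter (\<lambda>r. q ^ r * i \<le> length u) [0..<length u + 1])"

definition X_Omega :: "nat \<Rightarrow> nat \<Rightarrow> (nat \<Rightarrow> nat) set \<Rightarrow> (nat \<Rightarrow> nat) set" where
  "X_Omega m q \<Omega> = {x \<in> Sigma_sh m. \<forall>i\<ge>1. \<not> q dvd i \<longrightarrow>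
      (\<lambda>l. if l = 0 then 0 else x (i * q ^ (l - 1))) \<in> \<Omega>}"

definition alpha :: "nat \<Rightarrow> (nat \<Rightarrow> nat) set \<Rightarrow> nat \<Rightarrow> (nat \<Rightarrow> nat) set set" where
  "alpha m \<Omega> k = {\<Omega> \<inter> cyl m u | u. u \<in> words m k \<and> \<Omega> \<inter> cyl m u \<noteq> {}}"

definition entropy_m :: "nat \<Rightarrow> (nat \<Rightarrow> nat) measure \<Rightarrow> (nat \<Rightarrow> nat) set set \<Rightarrow> real" where
  "entropy_m m \<mu> \<A> = - (\<Sum>C\<in>\<A>. (if measure \<mu> C = 0 then 0
       else measure \<mu> C * log (real m) (measure \<mu> C)))"

definition s_val :: "nat \<Rightarrow> nat \<Rightarrow> (nat \<Rightarrow> nat) set \<Rightarrow> (nat \<Rightarrow> nat) measure \<Rightarrow> real" where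
  "s_val m q \<Omega> \<mu> = (real q - 1)^2 *
     (\<Sum>k. entropy_m m \<mu> (alpha m \<Omega> (k + 1)) / real q ^ (k + 2))"

definition sdiam :: "nat \<Rightarrow> (nat \<Rightarrow> nat) set \<Rightarrow> real" where
  "sdiam m A = (if A = {} then 0 else Sup {rho m x y | x y. x \<in> A \<and> y \<in> A})"

definition hmeasure :: "nat \<Rightarrow> real \<Rightarrow> (nat \<Rightarrow> nat) set \<Rightarrow> ennreal" where
  "hmeasure m s F = (SUP \<delta>\<in>{0<..}.
     INF U \<in> {U :: nat \<Rightarrow> (nat \<Rightarrow> nat) set. F \<subseteq> (\<Union>i. U i) \<and> (\<forall>i. sdiam m (U i) \<le> \<delta>)}.
       (\<Sum>i. ennreal (sdiam m (U i) powr s)))"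

definition dimH :: "nat \<Rightarrow> (nat \<Rightarrow> nat) set \<Rightarrow> real" where
  "dimH m F = Inf {s. s > 0 \<and> hmeasure m s F = 0}"

definition dimH_measure :: "nat \<Rightarrow> (nat \<Rightarrow> nat) measure \<Rightarrow> real" where
  "dimH_measure m P = Inf {dimH m F | F. F \<in> sets (borel_Sigma m) \<and> emeasure P F = 1}"

end

theory Submission
  imports Defs
begin

text \<open>By the product formula, \<open>-log\<^sub>m \<bbbP>\<^sub>\<mu>[x\<^sub>1\<^sup>n]\<close> is a sum over the \<open>i \<le> n\<close> with
  \<open>\<not> q dvd i\<close> of the information \<open>-log\<^sub>m \<mu>[x|J\<^sub>i]\<close>, and under \<open>\<bbbP>\<^sub>\<mu>\<close> these summands are
  independent with \<open>x|J\<^sub>i\<close> distributed by \<open>\<mu>\<close>. Exactly \<open>n(q-1)\<^sup>2/q\<^sup>k\<^sup>+\<^sup>1 + O(1)\<close> of the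
  orbits have length \<open>k\<close>, so the mean is \<open>n s(\<Omega>,\<mu>) + o(n)\<close>, while the variance is
  \<open>O(n log\<^sup>2 n)\<close>. Chebyshev and Borel-Cantelli along \<open>n = j\<^sup>4\<close>, together with the
  monotonicity in \<open>n\<close>, give the almost sure limit. The limit then controls the dimension:
  cylinders of mass \<open>\<ge> m\<^sup>-\<^sup>n\<^sup>(\<^sup>s\<^sup>+\<^sup>\<epsilon>\<^sup>)\<close> cover the typical points cheaply (upper bound), and
  the mass distribution principle on sets of positive measure gives the lower bound;
  typical points lie in \<open>X\<^sub>\<Omega>\<close> because \<open>\<Omega>\<close> is closed.\<close>

section \<open>The shift space and its cylinders\<close>

lemma space_borel_Sigma [simp]: "space (borel_Sigma m) = Sigma_sh m"
  unfolding borel_Sigma_def by (rule space_measure_of_conv)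

lemma sets_borel_Sigma: "sets (borel_Sigma m) = sigma_sets (Sigma_sh m) {U. Sopen m U}"
  unfolding borel_Sigma_def by (rule sets_measure_of) (auto simp: Sopen_def)

lemma Sopen_in_sets_borel_Sigma: "Sopen m U \<Longrightarrow> U \<in> sets (borel_Sigma m)"
  unfolding sets_borel_Sigma by auto

lemma rho_first_difference:
  assumes "x \<in> Sigma_sh m" "y \<in> Sigma_sh m" "x \<noteq> y"
  defines "L \<equiv> LEAST n. x n \<noteq> y n"
  shows "rho m x y = real m powr (1 - real L)" "L \<ge> 1" "\<And>j. j < L \<Longrightarrow> x j = y j"
proof -
  show "rho m x y = real m powr (1 - real L)"
    using assms(3) unfolding rho_def L_def by simp
  have "x L \<noteq> y L" unfolding L_def by (rule LeastI_ex) (use assms(3) in auto)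
  moreover have "x 0 = y 0" using assms by (simp add: Sigma_sh_def)
  ultimately show "L \<ge> 1" by (metis less_one linorder_not_le)
  show "\<And>j. j < L \<Longrightarrow> x j = y j" unfolding L_def using not_less_Least by blast
qed

lemma rho_le_m: "m \<ge> 2 \<Longrightarrow> rho m x y \<le> real m"
  using powr_mono[of "- real (LEAST n. x n \<noteq> y n) + 1" 1 "real m"] by (auto simp: rho_def)

lemma rho_le_if_agree:
  assumes m: "m \<ge> 2" and x: "x \<in> Sigma_sh m" and y: "y \<in> Sigma_sh m"
    and agree: "\<forall>j\<in>{1..n}. x j = y j"
  shows "rho m x y \<le> real m powr (- real n)"
proof (cases "x = y")
  case False
  define L where "L = (LEAST n. x n \<noteq> y n)"
  note L = rho_first_difference[OF x y False, folded L_def]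
  have "x L \<noteq> y L" unfolding L_def by (rule LeastI_ex) (use False in auto)
  hence "n < L" using agree L(2) by (meson atLeastAtMost_iff not_le)
  hence "real m powr (1 - real L) \<le> real m powr (- real n)"
    by (intro powr_mono) (use m in auto)
  thus ?thesis using L(1) by simp
qed (simp add: rho_def)

lemma agree_if_rho_less:
  assumes m: "m \<ge> 2" and x: "x \<in> Sigma_sh m" and y: "y \<in> Sigma_sh m"
    and small: "rho m x y < real m powr (1 - real n)"
  shows "\<forall>j\<in>{1..n}. x j = y j"
proof (cases "x = y")
  case False
  define L where "L = (LEAST n. x n \<noteq> y n)"
  note L = rho_first_difference[OF x y False, folded L_def]
  have "n < L"
  proof (rule ccontr)
    assume "\<not> n < L"
    hence "real m powr (1 - real n) \<le> real m powr (1 - real L)"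
      by (intro powr_mono) (use m in auto)
    thus False using small L(1) by linarith
  qed
  thus ?thesis using L(3) by auto
qed simp

lemma cyl_subset: "cyl m u \<subseteq> Sigma_sh m"
  by (auto simp: cyl_def)

lemma Sopen_cyl:
  assumes m: "m \<ge> 2" shows "Sopen m (cyl m u)"
  unfolding Sopen_def
proof (intro conjI ballI cyl_subset)
  fix x assume x: "x \<in> cyl m u"
  show "\<exists>e>0. \<forall>y\<in>Sigma_sh m. rho m x y < e \<longrightarrow> y \<in> cyl m u"
  proof (intro exI[of _ "real m powr (1 - real (length u))"] conjI ballI impI)
    fix y assume y: "y \<in> Sigma_sh m" and "rho m x y < real m powr (1 - real (length u))"
    with agree_if_rho_less[OF m cyl_subset[THEN subsetD, OF x] y] x
    show "y \<in> cyl m u" by (auto simp: cyl_def)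
  qed (use m in simp)
qed

lemma sets_cyl: "m \<ge> 2 \<Longrightarrow> cyl m u \<in> sets (borel_Sigma m)"
  by (rule Sopen_in_sets_borel_Sigma[OF Sopen_cyl])

lemma length_prefix_word [simp]: "length (prefix_word x n) = n"
  by (simp add: prefix_word_def)

lemma nth_prefix_word: "j < n \<Longrightarrow> prefix_word x n ! j = x (j + 1)"
  by (simp add: prefix_word_def del: upt_Suc)

lemma prefix_word_in_words: "x \<in> Sigma_sh m \<Longrightarrow> prefix_word x n \<in> words m n"
  by (auto simp: words_def prefix_word_def Sigma_sh_def)

lemma in_cyl_prefix_word: "x \<in> Sigma_sh m \<Longrightarrow> x \<in> cyl m (prefix_word x n)"
  by (auto simp: cyl_def nth_prefix_word)

lemma cyl_iff_prefix_word: "x \<in> cyl m u \<longleftrightarrow> x \<in> Sigma_sh m \<and> prefix_word x (length u) = u"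
proof -
  have "(\<forall>j\<in>{1..length u}. x j = u ! (j - 1)) \<longleftrightarrow> prefix_word x (length u) = u"
  proof
    assume "\<forall>j\<in>{1..length u}. x j = u ! (j - 1)"
    thus "prefix_word x (length u) = u"
      by (intro nth_equalityI) (auto simp: nth_prefix_word)
  next
    assume "prefix_word x (length u) = u"
    thus "\<forall>j\<in>{1..length u}. x j = u ! (j - 1)"
      by (metis Suc_le_eq Suc_pred' atLeastAtMost_iff diff_less less_one nth_prefix_word
          le_eq_less_or_eq Suc_eq_plus1 not_less0)
  qed
  thus ?thesis by (auto simp: cyl_def)
qed

lemma cyl_prefix_word_mono:
  "n \<le> n' \<Longrightarrow> cyl m (prefix_word x n') \<subseteq> cyl m (prefix_word x n)"
  by (auto simp: cyl_def nth_prefix_word)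

lemma take_prefix_word: "k \<le> n \<Longrightarrow> take k (prefix_word x n) = prefix_word x k"
  by (simp add: prefix_word_def take_map take_upt del: upt_Suc)

lemma cyl_mono_take:
  assumes "length v \<le> length w" "take (length v) w = v"
  shows "cyl m w \<subseteq> cyl m v"
proof
  fix z assume "z \<in> cyl m w"
  hence "z \<in> Sigma_sh m" "prefix_word z (length w) = w" by (auto simp: cyl_iff_prefix_word)
  moreover have "prefix_word z (length v) = take (length v) (prefix_word z (length w))"
    using assms(1) by (simp add: take_prefix_word)
  ultimately show "z \<in> cyl m v" using assms(2) by (simp add: cyl_iff_prefix_word)
qed

lemma in_cyl_prefix_word_if_rho_le:
  assumes m: "m \<ge> 2" and y: "y \<in> Sigma_sh m" and z: "z \<in> Sigma_sh m"
    and r: "rho m y z \<le> real m powr (- real n)"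
  shows "z \<in> cyl m (prefix_word y n)"
proof -
  have "real m powr (- real n) < real m powr (1 - real n)" using m by simp
  hence "\<forall>j\<in>{1..n}. y j = z j" using r by (intro agree_if_rho_less[OF m y z]) linarith
  thus ?thesis using z by (auto simp: cyl_def nth_prefix_word)
qed

lemma finite_words: "finite (words m n)"
proof -
  have "words m n \<subseteq> {xs. set xs \<subseteq> {..<m} \<and> length xs = n}" by (auto simp: words_def)
  thus ?thesis using finite_lists_length_eq[of "{..<m}" n] by (auto intro: finite_subset)
qed

lemma card_words: "card (words m k) = m ^ k"
proof -
  have "words m k = {xs. set xs \<subseteq> {..<m} \<and> length xs = k}" by (auto simp: words_def)
  thus ?thesis using card_lists_length_eq[of "{..<m}" k] by simp
qed

lemma cyl_disjoint: "u \<in> words m n \<Longrightarrow> v \<in> words m n \<Longrightarrow> u \<noteq> v \<Longrightarrow> cyl m u \<inter> cyl m v = {}"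
  by (auto simp: words_def dest!: cyl_iff_prefix_word[THEN iffD1])

lemma prefix_set_eq_UN_cyl:
  "{x \<in> Sigma_sh m. Q (prefix_word x n)} = (\<Union>u\<in>{u\<in>words m n. Q u}. cyl m u)"
  by (auto simp: cyl_iff_prefix_word words_def) (auto simp: Sigma_sh_def prefix_word_def)

lemma sets_prefix_set: "m \<ge> 2 \<Longrightarrow> {x \<in> Sigma_sh m. Q (prefix_word x n)} \<in> sets (borel_Sigma m)"
  unfolding prefix_set_eq_UN_cyl using finite_words sets_cyl
  by (intro sets.finite_UN) (auto intro: finite_subset)

lemma measure_prefix_set:
  assumes m: "m \<ge> 2" and M: "sets M = sets (borel_Sigma m)" and fin: "finite_measure M"
  shows "measure M {x \<in> Sigma_sh m. Q (prefix_word x n)} = (\<Sum>u\<in>{u\<in>words m n. Q u}. measure M (cyl m u))"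
proof -
  interpret finite_measure M by fact
  have "disjoint_family_on (cyl m) {u\<in>words m n. Q u}"
    unfolding disjoint_family_on_def using cyl_disjoint[of _ m n] by blast
  thus ?thesis unfolding prefix_set_eq_UN_cyl
    by (intro finite_measure_finite_Union) (use finite_words m M sets_cyl in \<open>auto intro: finite_subset\<close>)
qed

lemma sum_measure_cyl_words:
  assumes m: "m \<ge> 2" and M: "sets M = sets (borel_Sigma m)" and "prob_space M"
  shows "(\<Sum>u\<in>words m n. measure M (cyl m u)) = 1"
proof -
  interpret prob_space M by fact
  have "space M = Sigma_sh m" using sets_eq_imp_space_eq[OF M] by simp
  thus ?thesis using measure_prefix_set[OF m M, of "\<lambda>_. True" n] prob_space finite_measure_axioms
    by simp
qed

lemma ex_powr_neg_le:
  assumes m: "m \<ge> 2" and d: "d > 0"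
  shows "\<exists>n. real m powr (- real n) \<le> d"
proof -
  have "(\<lambda>n. inverse (real m) ^ n) \<longlonglongrightarrow> 0"
    by (rule LIMSEQ_power_zero) (use m in \<open>auto simp: inverse_less_1_iff\<close>)
  then obtain n where "inverse (real m) ^ n < d"
    using d by (metis LIMSEQ_le_const dual_order.strict_trans1 le_less not_le order_refl)
  moreover have "real m powr (- real n) = inverse (real m) ^ n"
    using m by (simp add: powr_minus powr_realpow power_inverse)
  ultimately show ?thesis by (intro exI[of _ n]) simp
qed

section \<open>Restriction of words to the orbits \<open>J\<^sub>i\<close>\<close>

definition orbit_len :: "nat \<Rightarrow> nat \<Rightarrow> nat \<Rightarrow> nat" where
  "orbit_len q n i = (LEAST r. n < q ^ r * i)"

definition orbit_starts :: "nat \<Rightarrow> nat \<Rightarrow> nat set" where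
  "orbit_starts q n = {i\<in>{1..n}. \<not> q dvd i}"

lemma finite_orbit_starts [simp]: "finite (orbit_starts q n)"
  by (simp add: orbit_starts_def)

lemma orbit_starts_Suc:
  "orbit_starts q (Suc n) = (if q dvd Suc n then orbit_starts q n else insert (Suc n) (orbit_starts q n))"
  by (auto simp: orbit_starts_def le_Suc_eq)

lemma less_power_mult:
  assumes "q \<ge> 2" "i \<ge> 1" shows "n < q ^ n * (i::nat)"
proof -
  have "n < 2 ^ n" by (rule less_exp)
  also have "\<dots> \<le> q ^ n" by (rule power_mono) (use assms in auto)
  also have "\<dots> \<le> q ^ n * i" using assms by simp
  finally show ?thesis .
qed

lemma less_orbit_len_iff:
  assumes q: "q \<ge> 2" and i: "i \<ge> 1"
  shows "r < orbit_len q n i \<longleftrightarrow> q ^ r * i \<le> n"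
proof
  assume "r < orbit_len q n i"
  thus "q ^ r * i \<le> n" unfolding orbit_len_def using not_less_Least by (metis not_le)
next
  assume le: "q ^ r * i \<le> n"
  have "n < q ^ orbit_len q n i * i"
    unfolding orbit_len_def by (rule LeastI_ex) (use less_power_mult[OF q i] in blast)
  moreover have "q ^ orbit_len q n i * i \<le> q ^ r * i" if "orbit_len q n i \<le> r"
    using that q by (simp add: power_increasing)
  ultimately show "r < orbit_len q n i" using le by (meson le_less_trans not_le)
qed

lemma orbit_len_le: "q \<ge> 2 \<Longrightarrow> i \<ge> 1 \<Longrightarrow> orbit_len q n i \<le> n"
  unfolding orbit_len_def by (rule Least_le) (rule less_power_mult)

lemma orbit_len_pos: "q \<ge> 2 \<Longrightarrow> 1 \<le> i \<Longrightarrow> i \<le> n \<Longrightarrow> orbit_len q n i \<ge> 1"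
  using less_orbit_len_iff[of q i 0 n] by simp

lemma orbit_len_le_orbit_len_1:
  assumes q: "q \<ge> 2" and i: "i \<ge> 1" shows "orbit_len q n i \<le> orbit_len q n 1"
proof (rule ccontr)
  assume "\<not> orbit_len q n i \<le> orbit_len q n 1"
  hence "q ^ orbit_len q n 1 * i \<le> n" using less_orbit_len_iff[OF q i] not_le by blast
  moreover have "q ^ orbit_len q n 1 \<le> q ^ orbit_len q n 1 * i" using i by simp
  ultimately have "q ^ orbit_len q n 1 * 1 \<le> n" by linarith
  thus False using less_orbit_len_iff[OF q order_refl, of "orbit_len q n 1" n] by simp
qed

lemma orbit_len_eqI:
  assumes "q \<ge> 2" "i \<ge> 1" "\<And>r. r < K \<longleftrightarrow> q ^ r * i \<le> n"
  shows "orbit_len q n i = K"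
proof -
  have "r < orbit_len q n i \<longleftrightarrow> r < K" for r
    using less_orbit_len_iff[OF assms(1,2)] assms(3) by simp
  thus ?thesis by (meson linorder_neqE_nat less_irrefl)
qed

lemma filter_less_upt: "K \<le> N \<Longrightarrow> filter (\<lambda>r. r < K) [0..<N] = [0..<K]"
  by (induction N) (auto simp: le_Suc_eq)

lemma restrJ_eq_map:
  assumes "q \<ge> 2" "i \<ge> 1"
  shows "restrJ q i u = map (\<lambda>r. u ! (q ^ r * i - 1)) [0..<orbit_len q (length u) i]"
proof -
  have "filter (\<lambda>r. q ^ r * i \<le> length u) [0..<length u + 1]
      = filter (\<lambda>r. r < orbit_len q (length u) i) [0..<length u + 1]"
    using less_orbit_len_iff[OF assms] by simp
  also have "\<dots> = [0..<orbit_len q (length u) i]"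
    by (rule filter_less_upt) (use orbit_len_le[OF assms, of "length u"] in simp)
  finally show ?thesis unfolding restrJ_def by simp
qed

lemma length_restrJ: "q \<ge> 2 \<Longrightarrow> i \<ge> 1 \<Longrightarrow> length (restrJ q i u) = orbit_len q (length u) i"
  by (simp add: restrJ_eq_map)

lemma ex_power_mult_not_dvd:
  fixes q p :: nat
  assumes q: "q \<ge> 2" and p: "p \<ge> 1"
  shows "\<exists>r i. p = q ^ r * i \<and> \<not> q dvd i"
  using p
proof (induction p rule: less_induct)
  case (less p)
  show ?case
  proof (cases "q dvd p")
    case True
    then obtain p' where p': "p = q * p'" by blast
    hence "p' \<ge> 1" using less.prems by (cases p') auto
    moreover have "p' < p" using p' q \<open>p' \<ge> 1\<close> by simp
    ultimately obtain r i where "p' = q ^ r * i" "\<not> q dvd i" using less.IH by blast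
    thus ?thesis using p' by (intro exI[of _ "Suc r"] exI[of _ i]) (simp add: mult.assoc)
  qed (intro exI[of _ 0] exI[of _ p], simp)
qed

lemma power_mult_not_dvd_unique:
  fixes q :: nat
  assumes q: "q \<ge> 2" and eq: "q ^ r * i = q ^ r' * i'" and "\<not> q dvd i" "\<not> q dvd i'"
  shows "i = i' \<and> r = r'"
proof -
  have *: "i = i' \<and> r = r'"
    if eq: "q ^ r * i = q ^ r' * i'" and "r \<le> r'" and ndvd: "\<not> q dvd i" for r r' i i'
  proof -
    obtain d where d: "r' = r + d" using \<open>r \<le> r'\<close> le_Suc_ex by blast
    have "q ^ r * i = q ^ r * (q ^ d * i')" using eq d by (simp add: power_add mult.assoc)
    hence ii: "i = q ^ d * i'" using q by simp
    have "d = 0"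
    proof (rule ccontr)
      assume "d \<noteq> 0"
      hence "q dvd i" using ii by (simp add: dvd_power)
      thus False using ndvd by simp
    qed
    thus ?thesis using ii d by simp
  qed
  show ?thesis
  proof (cases "r \<le> r'")
    case False
    thus ?thesis using *[OF eq[symmetric] _ assms(4)] by simp
  qed (use *[OF eq _ assms(3)] in simp)
qed

lemma orbit_len_snoc_own:
  assumes q: "q \<ge> 2" and d: "Suc n = q ^ r0 * i0"
  shows "orbit_len q n i0 = r0" "orbit_len q (Suc n) i0 = Suc r0"
    "length u = n \<Longrightarrow> restrJ q i0 (u @ [a]) = restrJ q i0 u @ [a]"
proof -
  have i0: "i0 \<ge> 1" using d by (cases i0) auto
  have lt_iff: "q ^ r * i0 < q ^ r' * i0 \<longleftrightarrow> r < r'" for r r'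
    using q i0 by simp
  have le_iff: "q ^ r * i0 \<le> q ^ r' * i0 \<longleftrightarrow> r \<le> r'" for r r'
    using q i0 by simp
  show own: "orbit_len q n i0 = r0"
    by (rule orbit_len_eqI[OF q i0]) (use lt_iff[of _ r0] in \<open>simp add: d[symmetric] less_Suc_eq_le\<close>)
  show "orbit_len q (Suc n) i0 = Suc r0"
    by (rule orbit_len_eqI[OF q i0]) (use le_iff[of _ r0] in \<open>simp add: d[symmetric] less_Suc_eq_le\<close>)
  assume u: "length u = n"
  have "(u @ [a]) ! (q ^ r * i0 - 1) = u ! (q ^ r * i0 - 1)" if "r < r0" for r
  proof -
    have "q ^ r * i0 < Suc n" "q ^ r * i0 \<ge> 1" using lt_iff[of r r0] that d q i0 by auto
    hence "q ^ r * i0 - 1 < length u" using u by linarith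
    thus ?thesis by (simp add: nth_append)
  qed
  moreover have "q ^ r0 * i0 - 1 = length u" using d u by simp
  hence "(u @ [a]) ! (q ^ r0 * i0 - 1) = a" by (simp add: nth_append)
  ultimately show "restrJ q i0 (u @ [a]) = restrJ q i0 u @ [a]"
    using own \<open>orbit_len q (Suc n) i0 = Suc r0\<close> u by (simp add: restrJ_eq_map[OF q i0])
qed

lemma orbit_len_snoc_other:
  assumes q: "q \<ge> 2" and d: "Suc n = q ^ r0 * i0" "\<not> q dvd i0"
    and i: "i \<in> orbit_starts q n" "i \<noteq> i0"
  shows "orbit_len q (Suc n) i = orbit_len q n i"
    "length u = n \<Longrightarrow> restrJ q i (u @ [a]) = restrJ q i u"
proof -
  have i1: "i \<ge> 1" using i by (simp add: orbit_starts_def)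
  have ne: "q ^ r * i \<noteq> Suc n" for r
    using power_mult_not_dvd_unique[OF q _ _ d(2)] d(1) i by (auto simp: orbit_starts_def)
  show eq: "orbit_len q (Suc n) i = orbit_len q n i"
    by (rule orbit_len_eqI[OF q i1]) (use ne less_orbit_len_iff[OF q i1] in \<open>auto simp: le_Suc_eq\<close>)
  assume u: "length u = n"
  have "(u @ [a]) ! (q ^ r * i - 1) = u ! (q ^ r * i - 1)" if "r < orbit_len q n i" for r
  proof -
    have "q ^ r * i \<le> n" "q ^ r * i \<ge> 1" using that less_orbit_len_iff[OF q i1] q i1 by auto
    hence "q ^ r * i - 1 < length u" using u by linarith
    thus ?thesis by (simp add: nth_append)
  qed
  thus "restrJ q i (u @ [a]) = restrJ q i u"
    using eq u by (simp add: restrJ_eq_map[OF q i1])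
qed

lemma words_Suc_image: "words m (Suc n) = (\<lambda>(u, a). u @ [a]) ` (words m n \<times> {..<m})"
proof
  show "words m (Suc n) \<subseteq> (\<lambda>(u, a). u @ [a]) ` (words m n \<times> {..<m})"
  proof
    fix w assume w: "w \<in> words m (Suc n)"
    hence "w \<noteq> []" by (auto simp: words_def)
    hence "w = butlast w @ [last w]" "butlast w \<in> words m n" "last w < m"
      using w by (auto simp: words_def dest: in_set_butlastD)
    thus "w \<in> (\<lambda>(u, a). u @ [a]) ` (words m n \<times> {..<m})"
      by (intro image_eqI[of _ _ "(butlast w, last w)"]) auto
  qed
qed (auto simp: words_def)

lemma sum_words_Suc: "(\<Sum>u\<in>words m (Suc n). f u) = (\<Sum>u\<in>words m n. \<Sum>a<m. f (u @ [a]))"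
proof -
  have inj: "inj_on (\<lambda>(u, a). u @ [a]) (words m n \<times> {..<m})"
    by (auto simp: inj_on_def)
  have "(\<Sum>u\<in>words m (Suc n). f u) = (\<Sum>p\<in>words m n \<times> {..<m}. f ((\<lambda>(u, a). u @ [a]) p))"
    unfolding words_Suc_image by (rule sum.reindex[OF inj, unfolded comp_def])
  also have "\<dots> = (\<Sum>u\<in>words m n. \<Sum>a<m. f (u @ [a]))"
    by (subst sum.cartesian_product) (simp add: case_prod_beta)
  finally show ?thesis .
qed

lemma words_0: "words m 0 = {[]}"
  by (auto simp: words_def)

abbreviation orbit_sum_prod_law :: "nat \<Rightarrow> nat \<Rightarrow> nat \<Rightarrow> (nat \<Rightarrow> nat list \<Rightarrow> real) \<Rightarrow> bool" where
  "orbit_sum_prod_law m q n F \<equiv>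
     (\<Sum>u\<in>words m n. \<Prod>i\<in>orbit_starts q n. F i (restrJ q i u))
       = (\<Prod>i\<in>orbit_starts q n. \<Sum>v\<in>words m (orbit_len q n i). F i v)"

lemma orbit_sum_prod_law_Suc_new:
  assumes q: "q \<ge> 2" and ndvd: "\<not> q dvd Suc n" and IH: "\<And>F. orbit_sum_prod_law m q n F"
  shows "orbit_sum_prod_law m q (Suc n) F"
proof -
  have d: "Suc n = q ^ 0 * Suc n" by simp
  note own = orbit_len_snoc_own[OF q d] and other = orbit_len_snoc_other[OF q d ndvd]
  have notin: "Suc n \<notin> orbit_starts q n" by (simp add: orbit_starts_def)
  have starts: "orbit_starts q (Suc n) = insert (Suc n) (orbit_starts q n)"
    using ndvd by (simp add: orbit_starts_Suc)
  have new: "restrJ q (Suc n) (u @ [a]) = [a]" if "u \<in> words m n" for u a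
    using own(1,3) that q by (simp add: words_def restrJ_eq_map)
  have "(\<Sum>u\<in>words m (Suc n). \<Prod>i\<in>orbit_starts q (Suc n). F i (restrJ q i u))
      = (\<Sum>u\<in>words m n. \<Sum>a<m. F (Suc n) [a] * (\<Prod>i\<in>orbit_starts q n. F i (restrJ q i u)))"
  proof (unfold sum_words_Suc starts, intro sum.cong refl)
    fix u a assume u: "u \<in> words m n"
    have "(\<Prod>i\<in>orbit_starts q n. F i (restrJ q i (u @ [a]))) = (\<Prod>i\<in>orbit_starts q n. F i (restrJ q i u))"
    proof (rule prod.cong[OF refl])
      fix i assume i: "i \<in> orbit_starts q n"
      hence "i \<noteq> Suc n" by (simp add: orbit_starts_def)
      thus "F i (restrJ q i (u @ [a])) = F i (restrJ q i u)"
        using other(2)[OF i] u by (simp add: words_def)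
    qed
    thus "(\<Prod>i\<in>insert (Suc n) (orbit_starts q n). F i (restrJ q i (u @ [a])))
        = F (Suc n) [a] * (\<Prod>i\<in>orbit_starts q n. F i (restrJ q i u))"
      using notin new[OF u] by simp
  qed
  also have "\<dots> = (\<Sum>a<m. F (Suc n) [a]) * (\<Sum>u\<in>words m n. \<Prod>i\<in>orbit_starts q n. F i (restrJ q i u))"
    by (simp add: sum_distrib_left sum_distrib_right)
  also have "\<dots> = (\<Sum>a<m. F (Suc n) [a]) * (\<Prod>i\<in>orbit_starts q n. \<Sum>v\<in>words m (orbit_len q n i). F i v)"
    using IH by simp
  also have "\<dots> = (\<Prod>i\<in>orbit_starts q (Suc n). \<Sum>v\<in>words m (orbit_len q (Suc n) i). F i v)"
  proof -
    have "(\<Prod>i\<in>orbit_starts q n. \<Sum>v\<in>words m (orbit_len q n i). F i v)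
        = (\<Prod>i\<in>orbit_starts q n. \<Sum>v\<in>words m (orbit_len q (Suc n) i). F i v)"
    proof (rule prod.cong[OF refl])
      fix i assume i: "i \<in> orbit_starts q n"
      hence "i \<noteq> Suc n" by (simp add: orbit_starts_def)
      thus "(\<Sum>v\<in>words m (orbit_len q n i). F i v) = (\<Sum>v\<in>words m (orbit_len q (Suc n) i). F i v)"
        using other(1)[OF i] by simp
    qed
    thus ?thesis unfolding starts using notin own(2) by (simp add: sum_words_Suc words_0)
  qed
  finally show ?thesis .
qed

lemma orbit_start_mem_if_dvd:
  assumes q: "q \<ge> 2" and dvd: "q dvd Suc n" and d: "Suc n = q ^ r0 * i0" "\<not> q dvd i0"
  shows "i0 \<in> orbit_starts q n"
proof -
  have "r0 \<noteq> 0"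
  proof
    assume "r0 = 0" thus False using d dvd by simp
  qed
  hence "q \<le> q ^ r0" using q by (simp add: self_le_power)
  hence "q * i0 \<le> Suc n" using d(1) by simp
  moreover have "i0 \<ge> 1" using d(1) by (cases i0) auto
  moreover have "2 * i0 \<le> q * i0" using q by simp
  ultimately have "1 \<le> i0 \<and> i0 \<le> n" by linarith
  thus ?thesis using d(2) by (simp add: orbit_starts_def)
qed

lemma orbit_sum_prod_law_Suc_extend:
  assumes q: "q \<ge> 2" and dvd: "q dvd Suc n" and IH: "\<And>F. orbit_sum_prod_law m q n F"
  shows "orbit_sum_prod_law m q (Suc n) F"
proof -
  obtain r0 i0 where d: "Suc n = q ^ r0 * i0" "\<not> q dvd i0"
    using ex_power_mult_not_dvd[OF q, of "Suc n"] by auto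
  note own = orbit_len_snoc_own[OF q d(1)] and other = orbit_len_snoc_other[OF q d]
  have i0: "i0 \<in> orbit_starts q n" by (rule orbit_start_mem_if_dvd[OF q dvd d])
  have starts: "orbit_starts q (Suc n) = orbit_starts q n"
    using dvd by (simp add: orbit_starts_Suc)
  have split: "(\<Prod>i\<in>orbit_starts q n. G i) = G i0 * (\<Prod>i\<in>orbit_starts q n - {i0}. G i)" for G
    using i0 by (simp add: prod.remove)
  define F' where "F' = F(i0 := (\<lambda>w. \<Sum>a<m. F i0 (w @ [a])))"
  have "(\<Sum>u\<in>words m (Suc n). \<Prod>i\<in>orbit_starts q (Suc n). F i (restrJ q i u))
      = (\<Sum>u\<in>words m n. \<Prod>i\<in>orbit_starts q n. F' i (restrJ q i u))"
  proof (unfold sum_words_Suc starts, rule sum.cong[OF refl])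
    fix u assume "u \<in> words m n"
    hence u: "length u = n" by (simp add: words_def)
    have rest: "(\<Prod>i\<in>orbit_starts q n - {i0}. F i (restrJ q i (u @ [a])))
        = (\<Prod>i\<in>orbit_starts q n - {i0}. F i (restrJ q i u))" for a
    proof (rule prod.cong[OF refl])
      fix i assume "i \<in> orbit_starts q n - {i0}"
      thus "F i (restrJ q i (u @ [a])) = F i (restrJ q i u)" using other(2)[of i u a] u by simp
    qed
    have "(\<Sum>a<m. \<Prod>i\<in>orbit_starts q n. F i (restrJ q i (u @ [a])))
        = (\<Sum>a<m. F i0 (restrJ q i0 u @ [a])) * (\<Prod>i\<in>orbit_starts q n - {i0}. F i (restrJ q i u))"
      unfolding split using rest own(3)[OF u] by (simp add: sum_distrib_right)
    also have "\<dots> = (\<Prod>i\<in>orbit_starts q n. F' i (restrJ q i u))"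
      unfolding split by (simp add: F'_def)
    finally show "(\<Sum>a<m. \<Prod>i\<in>orbit_starts q n. F i (restrJ q i (u @ [a])))
        = (\<Prod>i\<in>orbit_starts q n. F' i (restrJ q i u))" .
  qed
  also have "\<dots> = (\<Prod>i\<in>orbit_starts q n. \<Sum>v\<in>words m (orbit_len q n i). F' i v)"
    by (rule IH)
  also have "\<dots> = (\<Prod>i\<in>orbit_starts q (Suc n). \<Sum>v\<in>words m (orbit_len q (Suc n) i). F i v)"
  proof (unfold starts, rule prod.cong[OF refl])
    fix i assume i: "i \<in> orbit_starts q n"
    show "(\<Sum>v\<in>words m (orbit_len q n i). F' i v) = (\<Sum>v\<in>words m (orbit_len q (Suc n) i). F i v)"
    proof (cases "i = i0")
      case True thus ?thesis using own(1,2) by (simp add: F'_def sum_words_Suc)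
    next
      case False thus ?thesis using other(1)[OF i] by (simp add: F'_def)
    qed
  qed
  finally show ?thesis .
qed

text \<open>The identity says that \<open>u \<mapsto> (u|J\<^sub>i)\<^sub>i\<close> maps the words of length \<open>n\<close> bijectively onto
  the families of words of lengths \<open>orbit_len q n i\<close>; it is proved by appending one letter at
  a time, which extends exactly one orbit.\<close>

lemma orbit_sum_prod_law:
  assumes q: "q \<ge> 2"
  shows "orbit_sum_prod_law m q n F"
proof (induction n arbitrary: F)
  case 0 thus ?case by (simp add: words_0 orbit_starts_def)
next
  case (Suc n) thus ?case
    using orbit_sum_prod_law_Suc_new[OF q] orbit_sum_prod_law_Suc_extend[OF q] by blast
qed

section \<open>How many orbits have a given length\<close>

definition orbit_len_count :: "nat \<Rightarrow> nat \<Rightarrow> nat \<Rightarrow> nat" where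
  "orbit_len_count q n k = card {i\<in>orbit_starts q n. orbit_len q n i = k}"

lemma card_orbit_starts: "card (orbit_starts q x) = x - x div q"
proof (induction x)
  case (Suc x)
  have "x div q \<le> x" by simp
  moreover have "Suc x \<notin> orbit_starts q x" by (simp add: orbit_starts_def)
  ultimately show ?case
    using Suc.IH by (auto simp: orbit_starts_Suc div_Suc dvd_eq_mod_eq_0 Suc_diff_le)
qed (simp add: orbit_starts_def)

lemma orbit_starts_mono: "x \<le> y \<Longrightarrow> orbit_starts q x \<subseteq> orbit_starts q y"
  by (auto simp: orbit_starts_def)

lemma orbit_len_Suc_set:
  assumes q: "q \<ge> 2"
  shows "{i\<in>orbit_starts q n. orbit_len q n i = Suc k} =
    orbit_starts q (n div q ^ k) - orbit_starts q (n div q ^ Suc k)"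
proof -
  have qk: "q ^ k > 0" "q ^ Suc k > 0" using q by auto
  have key: "orbit_len q n i = Suc k \<longleftrightarrow> i * q ^ k \<le> n \<and> \<not> i * q ^ Suc k \<le> n" if "i \<ge> 1" for i
  proof -
    have "orbit_len q n i = Suc k \<longleftrightarrow> k < orbit_len q n i \<and> \<not> Suc k < orbit_len q n i" by auto
    thus ?thesis using less_orbit_len_iff[OF q that] by (simp add: mult.commute)
  qed
  have le_mult: "i \<le> i * q ^ k" for i using qk by simp
  show ?thesis
    using key qk by (auto simp: orbit_starts_def less_eq_div_iff_mult_less_eq intro: order_trans[OF le_mult])
qed

lemma real_div_gt: "d > 0 \<Longrightarrow> real n / real d - 1 < real (n div d)"
  using real_of_int_floor_gt_diff_one[of "real n / real d"] by (simp add: floor_divide_of_nat_eq)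

lemma orbit_len_count_Suc:
  assumes q: "q \<ge> 2"
  shows "real (orbit_len_count q n (Suc k))
    = real (n div q ^ k) - 2 * real (n div q ^ Suc k) + real (n div q ^ Suc (Suc k))"
proof -
  define B A C where "B = n div q ^ k" and "A = n div q ^ Suc k" and "C = n div q ^ Suc (Suc k)"
  have BA: "B div q = A" and AC: "A div q = C"
    unfolding A_def B_def C_def by (simp_all only: power_Suc2 div_mult2_eq)
  have "A \<le> B" "C \<le> A" unfolding BA[symmetric] AC[symmetric] by simp_all
  have sub: "orbit_starts q A \<subseteq> orbit_starts q B" using \<open>A \<le> B\<close> by (rule orbit_starts_mono)
  hence "orbit_len_count q n (Suc k) = card (orbit_starts q B) - card (orbit_starts q A)"
    unfolding orbit_len_count_def orbit_len_Suc_set[OF q] A_def B_def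
    by (intro card_Diff_subset) auto
  moreover have "card (orbit_starts q A) \<le> card (orbit_starts q B)"
    using sub by (intro card_mono) auto
  ultimately show ?thesis
    using \<open>A \<le> B\<close> \<open>C \<le> A\<close> unfolding card_orbit_starts BA AC A_def[symmetric] B_def[symmetric] C_def[symmetric]
    by (simp add: of_nat_diff)
qed

lemma orbit_len_count_approx:
  assumes q: "q \<ge> 2"
  shows "\<bar>real (orbit_len_count q n (Suc k)) - real n * (real q - 1)^2 / real q ^ (k + 2)\<bar> \<le> 2"
proof -
  define x where "x = real n / real q ^ k"
  have b1: "x - 1 < real (n div q ^ k)" "real (n div q ^ k) \<le> x"
    using real_div_gt[of "q ^ k" n] of_nat_div_le_of_nat[of n "q ^ k"] q unfolding x_def by auto
  have b2: "x / q - 1 < real (n div q ^ Suc k)" "real (n div q ^ Suc k) \<le> x / q"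
    using real_div_gt[of "q ^ Suc k" n] of_nat_div_le_of_nat[of n "q ^ Suc k"] q
    unfolding x_def by (auto simp: field_simps)
  have b3: "x / q^2 - 1 < real (n div q ^ Suc (Suc k))" "real (n div q ^ Suc (Suc k)) \<le> x / q^2"
    using real_div_gt[of "q ^ Suc (Suc k)" n] of_nat_div_le_of_nat[of n "q ^ Suc (Suc k)"] q
    unfolding x_def by (auto simp: field_simps power2_eq_square)
  have "real n * (real q - 1)^2 / real q ^ (k + 2) = x - 2 * (x / q) + x / q^2"
    unfolding x_def using q by (simp add: field_simps power2_eq_square)
  thus ?thesis unfolding orbit_len_count_Suc[OF q] using b1 b2 b3 by linarith
qed

lemma orbit_len_count_le:
  assumes q: "q \<ge> 2"
  shows "real (orbit_len_count q n (Suc k)) \<le> real n / real q ^ k"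
proof -
  have "orbit_len_count q n (Suc k) \<le> card (orbit_starts q (n div q ^ k))"
    unfolding orbit_len_count_def orbit_len_Suc_set[OF q] by (rule card_mono) auto
  also have "\<dots> \<le> n div q ^ k" by (simp add: card_orbit_starts)
  finally have "real (orbit_len_count q n (Suc k)) \<le> real (n div q ^ k)" by simp
  also have "\<dots> \<le> real n / real q ^ k" using of_nat_div_le_of_nat[of n "q ^ k"] by simp
  finally show ?thesis .
qed

lemma orbit_len_count_eq_0: "q \<ge> 2 \<Longrightarrow> n < k \<Longrightarrow> orbit_len_count q n k = 0"
  using orbit_len_le[of q _ n] by (force simp: orbit_len_count_def orbit_starts_def)

lemma orbit_len_count_density:
  assumes q: "q \<ge> 2"
  shows "(\<lambda>n. real (orbit_len_count q n (Suc k)) / real n) \<longlonglongrightarrow> (real q - 1)^2 / real q ^ (k + 2)"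
proof -
  define c where "c = (real q - 1)^2 / real q ^ (k + 2)"
  have "(\<lambda>n. real (orbit_len_count q n (Suc k)) / real n - c) \<longlonglongrightarrow> 0"
  proof (rule Lim_null_comparison)
    show "\<forall>\<^sub>F n in sequentially. norm (real (orbit_len_count q n (Suc k)) / real n - c) \<le> 2 / real n"
    proof (rule eventually_sequentiallyI[of 1])
      fix n :: nat assume "n \<ge> 1"
      hence "real (orbit_len_count q n (Suc k)) / real n - c
          = (real (orbit_len_count q n (Suc k)) - real n * c) / real n"
        by (simp add: field_simps)
      thus "norm (real (orbit_len_count q n (Suc k)) / real n - c) \<le> 2 / real n"
        using orbit_len_count_approx[OF q, of n k] by (simp add: c_def abs_div divide_right_mono)
    qed
  qed (rule lim_const_over_n)
  thus ?thesis by (simp add: LIM_zero_iff c_def)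
qed

section \<open>Entropy-type bounds\<close>

lemma mult_exp_neg_half_le: "y \<ge> 0 \<Longrightarrow> y * exp (- y / 2) \<le> (2::real)"
proof -
  assume y: "y \<ge> 0"
  have "1 + y / 2 \<le> exp (y / 2)" by (rule exp_ge_add_one_self)
  hence "y / 2 \<le> exp (y / 2)" by linarith
  hence "y \<le> 2 * exp (y / 2)" by linarith
  hence "y * exp (- y / 2) \<le> 2 * exp (y / 2) * exp (- y / 2)" by (simp add: mult_right_mono)
  also have "\<dots> = 2" by (simp add: exp_add[symmetric])
  finally show ?thesis .
qed

lemma sq_mult_exp_neg_half_le: "y \<ge> 0 \<Longrightarrow> y^2 * exp (- y / 2) \<le> (8::real)"
proof -
  assume y: "y \<ge> 0"
  have "1 + y / 2 + (y / 2)^2 / 2 \<le> exp (y / 2)" by (rule exp_lower_Taylor_quadratic) (use y in simp)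
  moreover have "0 \<le> 1 + y / 2" using y by simp
  ultimately have "(y / 2)^2 / 2 \<le> exp (y / 2)" by linarith
  hence "y^2 \<le> 8 * exp (y / 2)" by (simp add: power_divide)
  hence "y^2 * exp (- y / 2) \<le> 8 * exp (y / 2) * exp (- y / 2)" by (simp add: mult_right_mono)
  also have "\<dots> = 8" by (simp add: exp_add[symmetric])
  finally show ?thesis .
qed

text \<open>Split at \<open>p = 1/N\<^sup>2\<close>: below it write \<open>p = exp (-y)\<close> and use that \<open>y\<^sup>k exp (-y/2)\<close> is
  bounded, above it \<open>-ln p \<le> 2 ln N\<close>.\<close>

lemma neg_mult_ln_le:
  fixes p N :: real
  assumes p: "0 < p" "p \<le> 1" and N: "N \<ge> 1"
  shows "- p * ln p \<le> 2 * ln N * p + 2 / N"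
proof (cases "p < 1 / N^2")
  case True
  define y where "y = - ln p"
  have y0: "y \<ge> 0" using p ln_le_zero_iff[of p] by (simp add: y_def)
  have pe: "p = exp (- y)" using p by (simp add: y_def)
  have "exp (- y) = (exp (- y / 2))^2" by (simp add: power2_eq_square exp_add[symmetric])
  hence sq: "sqrt p = exp (- y / 2)" using pe by simp
  have "sqrt p < sqrt (1 / N^2)" using True by (simp add: real_sqrt_less_iff)
  hence sp: "sqrt p < 1 / N" using N by (simp add: real_sqrt_divide)
  have "- p * ln p = y * exp (- y)" using pe by (simp add: y_def)
  also have "\<dots> = (y * exp (- y / 2)) * exp (- y / 2)" by (simp add: exp_add[symmetric] mult.assoc)
  also have "\<dots> \<le> 2 * exp (- y / 2)" using mult_exp_neg_half_le[OF y0] by (simp add: mult_right_mono)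
  also have "\<dots> \<le> 2 / N" using sp sq by simp
  also have "\<dots> \<le> 2 * ln N * p + 2 / N" using N p by simp
  finally show ?thesis .
next
  case False
  hence "ln (1 / N^2) \<le> ln p" using p N by simp
  hence a: "- ln p \<le> 2 * ln N" using N by (simp add: ln_div ln_realpow)
  have c: "p * (- ln p) \<le> p * (2 * ln N)" by (rule mult_left_mono) (use a p in auto)
  have "0 \<le> 2 / N" using N by simp
  moreover have "- p * ln p = p * (- ln p)" by simp
  moreover have "p * (2 * ln N) = 2 * ln N * p" by simp
  ultimately show ?thesis using c by linarith
qed

lemma mult_ln_sq_le:
  fixes p N :: real
  assumes p: "0 < p" "p \<le> 1" and N: "N \<ge> 1"
  shows "p * (ln p)^2 \<le> 4 * (ln N)^2 * p + 8 / N"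
proof (cases "p < 1 / N^2")
  case True
  define y where "y = - ln p"
  have y0: "y \<ge> 0" using p ln_le_zero_iff[of p] by (simp add: y_def)
  have pe: "p = exp (- y)" using p by (simp add: y_def)
  have "exp (- y) = (exp (- y / 2))^2" by (simp add: power2_eq_square exp_add[symmetric])
  hence sq: "sqrt p = exp (- y / 2)" using pe by simp
  have "sqrt p < sqrt (1 / N^2)" using True by (simp add: real_sqrt_less_iff)
  hence sp: "sqrt p < 1 / N" using N by (simp add: real_sqrt_divide)
  have "p * (ln p)^2 = y^2 * exp (- y)" using pe by (simp add: y_def)
  also have "\<dots> = (y^2 * exp (- y / 2)) * exp (- y / 2)" by (simp add: exp_add[symmetric] mult.assoc)
  also have "\<dots> \<le> 8 * exp (- y / 2)" using sq_mult_exp_neg_half_le[OF y0] by (simp add: mult_right_mono)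
  also have "\<dots> \<le> 8 / N" using sp sq by simp
  also have "\<dots> \<le> 4 * (ln N)^2 * p + 8 / N" using N p by simp
  finally show ?thesis .
next
  case False
  hence "ln (1 / N^2) \<le> ln p" using p N by simp
  hence a: "- ln p \<le> 2 * ln N" using N by (simp add: ln_div ln_realpow)
  have b: "0 \<le> - ln p" using p by simp
  have "(ln p)^2 = (- ln p)^2" by simp
  also have "\<dots> \<le> (2 * ln N)^2" by (rule power_mono[OF a b])
  finally have "(ln p)^2 \<le> 4 * (ln N)^2" by (simp add: power_mult_distrib)
  hence c: "p * (ln p)^2 \<le> p * (4 * (ln N)^2)" using p by (simp add: mult_left_mono)
  have "0 \<le> 8 / N" using N by simp
  moreover have "p * (4 * (ln N)^2) = 4 * (ln N)^2 * p" by simp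
  ultimately show ?thesis using c by linarith
qed

lemma sum_neg_mult_ln_le:
  assumes fin: "finite A" and cA: "real (card A) \<le> N" and N: "N \<ge> 1"
    and p: "\<And>a. a \<in> A \<Longrightarrow> 0 \<le> p a \<and> p a \<le> 1" and s: "sum p A \<le> 1"
  shows "(\<Sum>a\<in>A. - p a * ln (p a)) \<le> 2 * ln N + 2"
proof -
  have "(\<Sum>a\<in>A. - p a * ln (p a)) \<le> (\<Sum>a\<in>A. 2 * ln N * p a + 2 / N)"
  proof (rule sum_mono)
    fix a assume a: "a \<in> A"
    show "- p a * ln (p a) \<le> 2 * ln N * p a + 2 / N"
    proof (cases "p a = 0")
      case True thus ?thesis using N by simp
    next
      case False thus ?thesis using neg_mult_ln_le[of "p a" N] p[OF a] N by simp
    qed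
  qed
  also have "\<dots> = 2 * ln N * sum p A + real (card A) * (2 / N)"
    by (simp add: sum.distrib sum_distrib_left)
  also have "\<dots> \<le> 2 * ln N * 1 + N * (2 / N)"
  proof (rule add_mono)
    show "2 * ln N * sum p A \<le> 2 * ln N * 1" using s N by (intro mult_left_mono) auto
    show "real (card A) * (2 / N) \<le> N * (2 / N)" using cA N by (intro mult_right_mono) auto
  qed
  also have "\<dots> = 2 * ln N + 2" using N by simp
  finally show ?thesis .
qed

lemma sum_mult_ln_sq_le:
  assumes fin: "finite A" and cA: "real (card A) \<le> N" and N: "N \<ge> 1"
    and p: "\<And>a. a \<in> A \<Longrightarrow> 0 \<le> p a \<and> p a \<le> 1" and s: "sum p A \<le> 1"
  shows "(\<Sum>a\<in>A. p a * (ln (p a))^2) \<le> 4 * (ln N)^2 + 8"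
proof -
  have "(\<Sum>a\<in>A. p a * (ln (p a))^2) \<le> (\<Sum>a\<in>A. 4 * (ln N)^2 * p a + 8 / N)"
  proof (rule sum_mono)
    fix a assume a: "a \<in> A"
    show "p a * (ln (p a))^2 \<le> 4 * (ln N)^2 * p a + 8 / N"
    proof (cases "p a = 0")
      case True thus ?thesis using N by simp
    next
      case False thus ?thesis using mult_ln_sq_le[of "p a" N] p[OF a] N by simp
    qed
  qed
  also have "\<dots> = 4 * (ln N)^2 * sum p A + real (card A) * (8 / N)"
    by (simp add: sum.distrib sum_distrib_left)
  also have "\<dots> \<le> 4 * (ln N)^2 * 1 + N * (8 / N)"
  proof (rule add_mono)
    show "4 * (ln N)^2 * sum p A \<le> 4 * (ln N)^2 * 1" using s by (intro mult_left_mono) auto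
    show "real (card A) * (8 / N) \<le> N * (8 / N)" using cA N by (intro mult_right_mono) auto
  qed
  also have "\<dots> = 4 * (ln N)^2 + 8" using N by simp
  finally show ?thesis .
qed

section \<open>The measure \<open>\<bbbP>\<^sub>\<mu>\<close> and the information function\<close>

lemma summable_affine_over_power:
  assumes q: "q \<ge> 2"
  shows "summable (\<lambda>k. (2 * real k + 5) / real q ^ k)"
proof (rule summable_ratio_test[where c = "7/10" and N = 0])
  fix k :: nat
  have "(2 * real (Suc k) + 5) * 10 \<le> 7 * (2 * real k + 5) * 2" by simp
  also have "\<dots> \<le> 7 * (2 * real k + 5) * real q" using q by (intro mult_left_mono) auto
  finally have "(2 * real (Suc k) + 5) / real q \<le> 7 / 10 * (2 * real k + 5)"
    using q by (simp add: divide_le_eq algebra_simps)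
  hence "(2 * real (Suc k) + 5) / real q / real q ^ k \<le> 7 / 10 * (2 * real k + 5) / real q ^ k"
    using q by (intro divide_right_mono) auto
  thus "norm ((2 * real (Suc k) + 5) / real q ^ Suc k) \<le> 7 / 10 * norm ((2 * real k + 5) / real q ^ k)"
    by (simp add: field_simps)
qed simp

locale orbit_product =
  fixes m q :: nat and \<mu> P :: "(nat \<Rightarrow> nat) measure"
  assumes m2: "m \<ge> 2" and q2: "q \<ge> 2"
    and prob\<mu>: "prob_space \<mu>" and sets\<mu>: "sets \<mu> = sets (borel_Sigma m)"
    and probP: "prob_space P" and setsP: "sets P = sets (borel_Sigma m)"
    and Pcyl: "\<And>u. u \<in> words m (length u) \<Longrightarrow>
           measure P (cyl m u) =
             (\<Prod>i\<in>{i\<in>{1..length u}. \<not> q dvd i}. measure \<mu> (cyl m (restrJ q i u)))"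
begin

definition mass :: "nat list \<Rightarrow> real" where
  "mass v = measure \<mu> (cyl m v)"

definition Pmass :: "nat list \<Rightarrow> real" where
  "Pmass u = measure P (cyl m u)"

text \<open>Since \<open>log m 0 = 0\<close> in Isabelle, \<open>info v = 0\<close> on null cylinders, matching \<open>0 log 0 = 0\<close>.\<close>

definition info :: "nat list \<Rightarrow> real" where
  "info v = - log (real m) (mass v)"

definition ent :: "nat \<Rightarrow> real" where
  "ent k = (\<Sum>v\<in>words m k. mass v * info v)"

definition ent2 :: "nat \<Rightarrow> real" where
  "ent2 k = (\<Sum>v\<in>words m k. mass v * (info v)^2)"

definition info_sum :: "nat \<Rightarrow> nat list \<Rightarrow> real" where
  "info_sum n u = (\<Sum>i\<in>orbit_starts q n. info (restrJ q i u))"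

definition mean_info :: "nat \<Rightarrow> real" where
  "mean_info n = (\<Sum>i\<in>orbit_starts q n. ent (orbit_len q n i))"

definition rate :: real where
  "rate = (real q - 1)^2 * (\<Sum>k. ent (Suc k) / real q ^ (k + 2))"

lemma space_P: "space P = Sigma_sh m"
  using sets_eq_imp_space_eq[OF setsP] by simp

lemma mass_nonneg: "0 \<le> mass v"
  by (simp add: mass_def)

lemma mass_le_1: "mass v \<le> 1"
  unfolding mass_def using prob_space.prob_le_1[OF prob\<mu>] .

lemma Pmass_nonneg: "0 \<le> Pmass u"
  by (simp add: Pmass_def)

lemma Pmass_le_1: "Pmass u \<le> 1"
  unfolding Pmass_def using prob_space.prob_le_1[OF probP] .

lemma sum_mass: "(\<Sum>v\<in>words m k. mass v) = 1"
  unfolding mass_def by (rule sum_measure_cyl_words[OF m2 sets\<mu> prob\<mu>])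

lemma sum_Pmass: "(\<Sum>u\<in>words m k. Pmass u) = 1"
  unfolding Pmass_def by (rule sum_measure_cyl_words[OF m2 setsP probP])

lemma Pmass_prod: "u \<in> words m n \<Longrightarrow> Pmass u = (\<Prod>i\<in>orbit_starts q n. mass (restrJ q i u))"
  using Pcyl[of u] by (simp add: words_def Pmass_def mass_def orbit_starts_def)

lemma sets_P_prefix_set: "{x \<in> Sigma_sh m. Q (prefix_word x n)} \<in> sets P"
  using sets_prefix_set[OF m2] setsP by simp

lemma measure_P_prefix_set:
  "measure P {x \<in> Sigma_sh m. Q (prefix_word x n)} = (\<Sum>u\<in>{u\<in>words m n. Q u}. Pmass u)"
  unfolding Pmass_def
  by (rule measure_prefix_set[OF m2 setsP]) (use probP in \<open>simp add: prob_space_def\<close>)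

lemma expectation_prod_restrJ:
  "(\<Sum>u\<in>words m n. Pmass u * (\<Prod>i\<in>orbit_starts q n. G i (restrJ q i u)))
     = (\<Prod>i\<in>orbit_starts q n. \<Sum>v\<in>words m (orbit_len q n i). mass v * G i v)"
proof -
  have "(\<Sum>u\<in>words m n. Pmass u * (\<Prod>i\<in>orbit_starts q n. G i (restrJ q i u)))
      = (\<Sum>u\<in>words m n. \<Prod>i\<in>orbit_starts q n. (\<lambda>i v. mass v * G i v) i (restrJ q i u))"
    by (rule sum.cong[OF refl]) (simp add: Pmass_prod prod.distrib)
  also have "\<dots> = (\<Prod>i\<in>orbit_starts q n. \<Sum>v\<in>words m (orbit_len q n i). mass v * G i v)"
    by (rule orbit_sum_prod_law[OF q2])
  finally show ?thesis .
qed

lemma expectation_restrJ: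
  assumes j: "j \<in> orbit_starts q n"
  shows "(\<Sum>u\<in>words m n. Pmass u * g (restrJ q j u)) = (\<Sum>v\<in>words m (orbit_len q n j). mass v * g v)"
proof -
  define G where "G i v = (if i = j then g v else 1)" for i v
  have "(\<Prod>i\<in>orbit_starts q n. G i (restrJ q i u)) = g (restrJ q j u)" for u
    using j by (simp add: G_def)
  moreover have "(\<Prod>i\<in>orbit_starts q n. \<Sum>v\<in>words m (orbit_len q n i). mass v * G i v)
      = (\<Sum>v\<in>words m (orbit_len q n j). mass v * g v)"
  proof -
    have "(\<Sum>v\<in>words m (orbit_len q n i). mass v * G i v)
        = (if i = j then (\<Sum>v\<in>words m (orbit_len q n j). mass v * g v) else 1)" for i
      by (simp add: G_def sum_mass)
    thus ?thesis using j by simp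
  qed
  ultimately show ?thesis using expectation_prod_restrJ[where n=n and G=G] by simp
qed

lemma expectation_restrJ_pair:
  assumes j: "j \<in> orbit_starts q n" and l: "l \<in> orbit_starts q n" and jl: "j \<noteq> l"
  shows "(\<Sum>u\<in>words m n. Pmass u * (g (restrJ q j u) * h (restrJ q l u)))
    = (\<Sum>v\<in>words m (orbit_len q n j). mass v * g v) * (\<Sum>v\<in>words m (orbit_len q n l). mass v * h v)"
proof -
  define G where "G i v = (if i = j then g v else 1) * (if i = l then h v else 1)" for i v
  have "(\<Prod>i\<in>orbit_starts q n. G i (restrJ q i u)) = g (restrJ q j u) * h (restrJ q l u)" for u
    using j l by (simp add: G_def prod.distrib)
  moreover have "(\<Prod>i\<in>orbit_starts q n. \<Sum>v\<in>words m (orbit_len q n i). mass v * G i v)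
      = (\<Sum>v\<in>words m (orbit_len q n j). mass v * g v) * (\<Sum>v\<in>words m (orbit_len q n l). mass v * h v)"
  proof -
    have "(\<Sum>v\<in>words m (orbit_len q n i). mass v * G i v)
        = (if i = j then (\<Sum>v\<in>words m (orbit_len q n j). mass v * g v) else 1)
          * (if i = l then (\<Sum>v\<in>words m (orbit_len q n l). mass v * h v) else 1)" for i
      using jl by (auto simp: G_def sum_mass)
    thus ?thesis using j l by (simp add: prod.distrib)
  qed
  ultimately show ?thesis using expectation_prod_restrJ[where n=n and G=G] by simp
qed

lemma sum_mass_info_centered: "(\<Sum>v\<in>words m k. mass v * (info v - ent k)) = 0"
  by (simp add: right_diff_distrib sum_subtractf ent_def flip: sum_distrib_right)
     (simp add: sum_mass)

lemma sum_mass_info_centered_sq_le: "(\<Sum>v\<in>words m k. mass v * (info v - ent k)^2) \<le> ent2 k"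
proof -
  have "(\<Sum>v\<in>words m k. mass v * (info v - ent k)^2)
      = (\<Sum>v\<in>words m k. mass v * (info v)^2 - (2 * ent k) * (mass v * info v) + (ent k)^2 * mass v)"
    by (rule sum.cong[OF refl]) (simp add: power2_diff algebra_simps)
  also have "\<dots> = ent2 k - (2 * ent k) * ent k + (ent k)^2 * (\<Sum>v\<in>words m k. mass v)"
    by (simp add: sum.distrib sum_subtractf sum_distrib_left ent_def ent2_def)
  finally show ?thesis by (simp add: sum_mass power2_eq_square)
qed

lemma variance_info_sum_le:
  "(\<Sum>u\<in>words m n. Pmass u * (info_sum n u - mean_info n)^2) \<le> (\<Sum>i\<in>orbit_starts q n. ent2 (orbit_len q n i))"
proof -
  define Z where "Z j v = info v - ent (orbit_len q n j)" for j v
  define X where "X j l = (\<Sum>u\<in>words m n. Pmass u * (Z j (restrJ q j u) * Z l (restrJ q l u)))" for j l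
  have centered: "info_sum n u - mean_info n = (\<Sum>j\<in>orbit_starts q n. Z j (restrJ q j u))" for u
    by (simp add: info_sum_def mean_info_def Z_def sum_subtractf)
  have "(\<Sum>u\<in>words m n. Pmass u * (info_sum n u - mean_info n)^2)
      = (\<Sum>j\<in>orbit_starts q n. \<Sum>l\<in>orbit_starts q n. X j l)"
    unfolding centered X_def power2_eq_square sum_product
    by (simp add: sum_distrib_left sum.swap[of _ "words m n"])
  also have "\<dots> = (\<Sum>j\<in>orbit_starts q n. X j j)"
  proof (rule sum.cong[OF refl])
    fix j assume j: "j \<in> orbit_starts q n"
    have "X j l = 0" if "l \<in> orbit_starts q n" "l \<noteq> j" for l
      unfolding X_def expectation_restrJ_pair[OF j that(1) that(2)[symmetric]]
      by (simp add: Z_def sum_mass_info_centered)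
    thus "(\<Sum>l\<in>orbit_starts q n. X j l) = X j j"
      using j by (subst sum.remove[of _ j]) auto
  qed
  also have "\<dots> \<le> (\<Sum>j\<in>orbit_starts q n. ent2 (orbit_len q n j))"
  proof (rule sum_mono)
    fix j assume j: "j \<in> orbit_starts q n"
    have "X j j = (\<Sum>v\<in>words m (orbit_len q n j). mass v * (Z j v)^2)"
      unfolding X_def power2_eq_square by (rule expectation_restrJ[OF j])
    thus "X j j \<le> ent2 (orbit_len q n j)" unfolding Z_def using sum_mass_info_centered_sq_le by simp
  qed
  finally show ?thesis .
qed

lemma chebyshev_info_sum:
  assumes c: "c > 0"
  shows "measure P {x \<in> Sigma_sh m. c \<le> \<bar>info_sum n (prefix_word x n) - mean_info n\<bar>}
    \<le> (\<Sum>i\<in>orbit_starts q n. ent2 (orbit_len q n i)) / c^2"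
proof -
  let ?D = "\<lambda>u. (info_sum n u - mean_info n)^2"
  have "measure P {x \<in> Sigma_sh m. c \<le> \<bar>info_sum n (prefix_word x n) - mean_info n\<bar>}
      = (\<Sum>u\<in>{u\<in>words m n. c \<le> \<bar>info_sum n u - mean_info n\<bar>}. Pmass u)"
    by (rule measure_P_prefix_set)
  also have "\<dots> \<le> (\<Sum>u\<in>{u\<in>words m n. c \<le> \<bar>info_sum n u - mean_info n\<bar>}. Pmass u * ?D u / c^2)"
  proof (rule sum_mono)
    fix u assume "u \<in> {u\<in>words m n. c \<le> \<bar>info_sum n u - mean_info n\<bar>}"
    hence "c^2 \<le> \<bar>info_sum n u - mean_info n\<bar>^2" using c by (intro power_mono) auto
    hence "c^2 \<le> ?D u" by simp
    hence "Pmass u * 1 \<le> Pmass u * (?D u / c^2)"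
      using c Pmass_nonneg by (intro mult_left_mono) auto
    thus "Pmass u \<le> Pmass u * ?D u / c^2" by simp
  qed
  also have "\<dots> \<le> (\<Sum>u\<in>words m n. Pmass u * ?D u / c^2)"
    by (rule sum_mono2) (use finite_words Pmass_nonneg in auto)
  also have "\<dots> \<le> (\<Sum>i\<in>orbit_starts q n. ent2 (orbit_len q n i)) / c^2"
    using variance_info_sum_le c by (simp add: divide_right_mono flip: sum_divide_distrib)
  finally show ?thesis .
qed

lemma ln_m_ge: "ln (real m) \<ge> 2/3"
proof -
  have "ln (2::real) \<le> ln (real m)" using m2 by simp
  thus ?thesis using ln2_ge_two_thirds by linarith
qed

lemma info_eq: "info v = - ln (mass v) / ln (real m)"
  by (simp add: info_def log_def)

lemma info_nonneg: "0 \<le> info v"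
  using ln_m_ge mass_le_1[of v] mass_nonneg[of v]
  by (cases "mass v = 0") (auto simp: info_eq divide_nonpos_pos)

lemma ent_nonneg: "0 \<le> ent k"
  unfolding ent_def by (intro sum_nonneg mult_nonneg_nonneg mass_nonneg info_nonneg)

lemma ent_le: "ent k \<le> 2 * real k + 3"
proof -
  define N where "N = real m ^ k"
  have N: "N \<ge> 1" "real (card (words m k)) \<le> N" "ln N = real k * ln (real m)"
    using m2 by (simp_all add: N_def card_words ln_realpow)
  have "(\<Sum>v\<in>words m k. - mass v * ln (mass v)) \<le> 2 * ln N + 2"
    by (rule sum_neg_mult_ln_le[OF finite_words N(2,1)]) (simp_all add: mass_nonneg mass_le_1 sum_mass)
  moreover have "ent k = (\<Sum>v\<in>words m k. - mass v * ln (mass v)) / ln (real m)"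
    unfolding ent_def info_eq by (simp add: sum_divide_distrib)
  ultimately have "ent k \<le> (2 * (real k * ln (real m)) + 2) / ln (real m)"
    using ln_m_ge N(3) by (simp add: divide_right_mono)
  also have "\<dots> = 2 * real k + 2 / ln (real m)" using ln_m_ge by (simp add: field_simps)
  also have "2 / ln (real m) \<le> 3" using ln_m_ge by (simp add: field_simps)
  finally show ?thesis by simp
qed

lemma ent2_le: "ent2 k \<le> 4 * (real k)^2 + 18"
proof -
  define N where "N = real m ^ k"
  have N: "N \<ge> 1" "real (card (words m k)) \<le> N" "ln N = real k * ln (real m)"
    using m2 by (simp_all add: N_def card_words ln_realpow)
  have l: "4/9 \<le> (ln (real m))^2"
    using power_mono[OF ln_m_ge, of 2] by (simp add: power2_eq_square)
  have "(\<Sum>v\<in>words m k. mass v * (ln (mass v))^2) \<le> 4 * (ln N)^2 + 8"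
    by (rule sum_mult_ln_sq_le[OF finite_words N(2,1)]) (simp_all add: mass_nonneg mass_le_1 sum_mass)
  moreover have "ent2 k = (\<Sum>v\<in>words m k. mass v * (ln (mass v))^2) / (ln (real m))^2"
    unfolding ent2_def info_eq by (simp add: sum_divide_distrib power_divide)
  ultimately have "ent2 k \<le> (4 * (real k * ln (real m))^2 + 8) / (ln (real m))^2"
    using l N(3) by (simp add: divide_right_mono)
  also have "\<dots> = 4 * (real k)^2 + 8 / (ln (real m))^2" using ln_m_ge by (simp add: field_simps)
  also have "8 / (ln (real m))^2 \<le> 18" using l by (simp add: divide_le_eq)
  finally show ?thesis by simp
qed

lemma sum_ent2_orbit_len_le:
  "(\<Sum>i\<in>orbit_starts q n. ent2 (orbit_len q n i)) \<le> real n * (4 * real ((orbit_len q n 1)^2) + 18)"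
proof -
  have "ent2 (orbit_len q n i) \<le> 4 * real ((orbit_len q n 1)^2) + 18" if "i \<in> orbit_starts q n" for i
  proof -
    have "orbit_len q n i \<le> orbit_len q n 1"
      using that orbit_len_le_orbit_len_1[OF q2] by (simp add: orbit_starts_def)
    hence "(real (orbit_len q n i))^2 \<le> real ((orbit_len q n 1)^2)"
      by (simp flip: of_nat_power add: power_mono)
    thus ?thesis using ent2_le[of "orbit_len q n i"] by linarith
  qed
  hence "(\<Sum>i\<in>orbit_starts q n. ent2 (orbit_len q n i))
      \<le> real (card (orbit_starts q n)) * (4 * real ((orbit_len q n 1)^2) + 18)"
    by (rule sum_bounded_above)
  also have "\<dots> \<le> real n * (4 * real ((orbit_len q n 1)^2) + 18)"
    by (intro mult_right_mono) (simp_all add: card_orbit_starts)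
  finally show ?thesis .
qed

lemma mean_info_eq_sum_orbit_len_count:
  "mean_info n = (\<Sum>k<n. real (orbit_len_count q n (Suc k)) * ent (Suc k))"
proof -
  have "orbit_len q n ` orbit_starts q n \<subseteq> {1..n}"
    using orbit_len_pos[OF q2] orbit_len_le[OF q2] by (auto simp: orbit_starts_def)
  hence "mean_info n = (\<Sum>k\<in>{1..n}. \<Sum>i\<in>{i \<in> orbit_starts q n. orbit_len q n i = k}. ent (orbit_len q n i))"
    unfolding mean_info_def by (intro sum.group[symmetric]) auto
  also have "\<dots> = (\<Sum>k\<in>{1..n}. real (orbit_len_count q n k) * ent k)"
    by (intro sum.cong refl) (simp add: orbit_len_count_def)
  also have "\<dots> = (\<Sum>k<n. real (orbit_len_count q n (Suc k)) * ent (Suc k))"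
    by (simp add: sum.atLeast1_atMost_eq)
  finally show ?thesis .
qed

lemma summable_ent: "summable (\<lambda>k. ent (Suc k) / real q ^ (k + 2))"
proof (rule summable_comparison_test[OF _ summable_affine_over_power[OF q2]])
  have "ent (Suc k) / real q ^ (k + 2) \<le> (2 * real k + 5) / real q ^ k" for k
  proof -
    have "(1::real) * 1 \<le> real q * real q" using q2 by (intro mult_mono) auto
    hence "ent (Suc k) / real q ^ (k + 2) \<le> ent (Suc k) / real q ^ k"
      using ent_nonneg q2 by (intro divide_left_mono) (auto intro!: power_increasing)
    also have "\<dots> \<le> (2 * real k + 5) / real q ^ k"
      using ent_le[of "Suc k"] by (intro divide_right_mono) auto
    finally show ?thesis .
  qed
  thus "\<exists>N. \<forall>k\<ge>N. norm (ent (Suc k) / real q ^ (k + 2)) \<le> (2 * real k + 5) / real q ^ k"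
    using ent_nonneg by auto
qed

text \<open>Tannery's theorem for \<open>mean_info n / n = \<Sum>\<^sub>k (orbit_len_count q n (k+1) / n) ent (k+1)\<close>,
  whose terms are dominated by \<open>(2k+5)/q\<^sup>k\<close>.\<close>

lemma mean_info_rate: "(\<lambda>n. mean_info n / real n) \<longlonglongrightarrow> rate"
proof -
  define f where "f k n = real (orbit_len_count q n (Suc k)) / real n * ent (Suc k)" for k n
  define c where "c k = (real q - 1)^2 / real q ^ (k + 2) * ent (Suc k)" for k
  have eq: "mean_info n / real n = (\<Sum>k. f k n)" for n
  proof -
    have "(\<Sum>k. f k n) = (\<Sum>k<n. f k n)"
      by (rule suminf_finite) (auto simp: f_def orbit_len_count_eq_0[OF q2])
    thus ?thesis by (simp add: mean_info_eq_sum_orbit_len_count f_def sum_divide_distrib)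
  qed
  have lim: "(\<lambda>n. f k n) \<longlonglongrightarrow> c k" for k
    unfolding f_def c_def by (intro tendsto_mult_right orbit_len_count_density[OF q2])
  have bound: "\<bar>f k n\<bar> \<le> (2 * real k + 5) / real q ^ k" for k n
  proof (cases "n = 0")
    case False
    have "f k n \<le> real n / real q ^ k / real n * ent (Suc k)"
      unfolding f_def using orbit_len_count_le[OF q2, of n k] ent_nonneg
      by (intro divide_right_mono mult_right_mono) auto
    also have "\<dots> \<le> (2 * real k + 5) / real q ^ k"
      using False ent_le[of "Suc k"] q2 by (simp add: divide_right_mono)
    finally show ?thesis by (simp add: f_def ent_nonneg)
  qed (simp add: f_def)
  have "eventually (\<lambda>n. summable (\<lambda>k. norm (f k n))) sequentially \<and> summable (\<lambda>k. norm (c k)) \<and>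
      (\<lambda>n. \<Sum>k. f k n) \<longlonglongrightarrow> (\<Sum>k. c k)"
    by (rule tannerys_theorem[OF lim _ summable_affine_over_power[OF q2]])
       (auto intro!: always_eventually simp: bound)
  hence "(\<lambda>n. \<Sum>k. f k n) \<longlonglongrightarrow> (\<Sum>k. c k)" by blast
  moreover have "(\<Sum>k. c k) = rate"
    unfolding c_def rate_def using suminf_mult[OF summable_ent, of "(real q - 1)^2"]
    by (simp add: field_simps)
  ultimately show ?thesis using eq by simp
qed

lemma rate_nonneg: "rate \<ge> 0"
  unfolding rate_def using summable_ent ent_nonneg q2 by (intro mult_nonneg_nonneg suminf_nonneg) auto

end

section \<open>Almost sure convergence of the information rate\<close>

lemma bracketing_index:
  fixes nn :: "nat \<Rightarrow> nat"
  assumes "strict_mono nn"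
  obtains J where "filterlim J at_top sequentially"
    "\<And>n. nn 0 \<le> n \<Longrightarrow> nn (J n) \<le> n" "\<And>n. n < nn (Suc (J n))"
proof
  define J where "J n = (LEAST j. n < nn (Suc j))" for n
  have ex: "\<exists>j. n < nn (Suc j)" for n
    using seq_suble[OF assms, of "Suc n"] by (intro exI[of _ n]) simp
  show upper: "n < nn (Suc (J n))" for n
    unfolding J_def by (rule LeastI_ex[OF ex])
  show "nn (J n) \<le> n" if "nn 0 \<le> n" for n
  proof (cases "J n")
    case (Suc i)
    have "\<not> n < nn (Suc i)"
      using Suc not_less_Least[of i "\<lambda>j. n < nn (Suc j)"] by (simp add: J_def)
    thus ?thesis using Suc by simp
  qed (use that in simp)
  show "filterlim J at_top sequentially"
    unfolding filterlim_at_top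
  proof (intro allI eventually_sequentiallyI)
    fix Z n assume "nn Z \<le> n"
    thus "Z \<le> J n" using upper[of n] strict_mono_less_eq[OF assms, of "Suc (J n)" Z] by linarith
  qed
qed

lemma tendsto_div_of_mono_subseq:
  fixes f :: "nat \<Rightarrow> real" and nn :: "nat \<Rightarrow> nat"
  assumes mono: "incseq f" and nonneg: "\<And>n. 0 \<le> f n"
    and nn: "strict_mono nn" "\<And>j. nn j > 0"
    and ratio: "(\<lambda>j. real (nn (Suc j)) / real (nn j)) \<longlonglongrightarrow> 1"
    and lim: "(\<lambda>j. f (nn j) / real (nn j)) \<longlonglongrightarrow> s"
  shows "(\<lambda>n. f n / real n) \<longlonglongrightarrow> s"
proof -
  obtain J where J: "filterlim J at_top sequentially"
    "\<And>n. nn 0 \<le> n \<Longrightarrow> nn (J n) \<le> n" "\<And>n. n < nn (Suc (J n))"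
    using bracketing_index[OF nn(1)] by blast
  define g1 where "g1 j = f (nn j) / real (nn j) * (real (nn j) / real (nn (Suc j)))" for j
  define g2 where "g2 j = f (nn (Suc j)) / real (nn (Suc j)) * (real (nn (Suc j)) / real (nn j))" for j
  have ratio': "(\<lambda>j. real (nn j) / real (nn (Suc j))) \<longlonglongrightarrow> 1"
    using tendsto_inverse[OF ratio] by (simp add: inverse_eq_divide)
  have "g1 \<longlonglongrightarrow> s" unfolding g1_def using tendsto_mult[OF lim ratio'] by simp
  moreover have "g2 \<longlonglongrightarrow> s" unfolding g2_def using tendsto_mult[OF LIMSEQ_Suc[OF lim] ratio] by simp
  ultimately have g1J: "(\<lambda>n. g1 (J n)) \<longlonglongrightarrow> s" and g2J: "(\<lambda>n. g2 (J n)) \<longlonglongrightarrow> s"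
    by (auto intro: filterlim_compose[OF _ J(1)])
  show ?thesis
  proof (rule tendsto_sandwich[OF _ _ g1J g2J];
         rule eventually_sequentiallyI[of "max 1 (nn 0)"])
    fix n :: nat assume n: "max 1 (nn 0) \<le> n"
    have a: "nn (J n) \<le> n" and b: "n < nn (Suc (J n))" using J(2,3) n by auto
    have "g1 (J n) = f (nn (J n)) / real (nn (Suc (J n)))" using nn(2) by (simp add: g1_def)
    also have "\<dots> \<le> f (nn (J n)) / real n"
      using b n nonneg by (intro divide_left_mono) auto
    also have "\<dots> \<le> f n / real n"
      using incseqD[OF mono a] n by (intro divide_right_mono) auto
    finally show "g1 (J n) \<le> f n / real n" .
    have "f n / real n \<le> f (nn (Suc (J n))) / real n"
      using incseqD[OF mono, of n "nn (Suc (J n))"] b n by (intro divide_right_mono) auto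
    also have "\<dots> \<le> f (nn (Suc (J n))) / real (nn (J n))"
      using a nn(2)[of "J n"] nonneg by (intro divide_left_mono) auto
    also have "\<dots> = g2 (J n)" using nn(2) by (simp add: g2_def)
    finally show "f n / real n \<le> g2 (J n)" .
  qed
qed

lemma fourth_power_ratio: "(\<lambda>j. real ((Suc (Suc j))^4) / real ((Suc j)^4)) \<longlonglongrightarrow> 1"
proof -
  have "(\<lambda>j. (1 + 1 / real (Suc j))^4) \<longlonglongrightarrow> (1 + 0)^4"
    by (intro tendsto_intros LIMSEQ_Suc[OF lim_const_over_n])
  moreover have "(1 + 1 / real (Suc j))^4 = real ((Suc (Suc j))^4) / real ((Suc j)^4)" for j
    by (simp add: field_simps)
  ultimately show ?thesis by simp
qed

lemma Suc_sq_le_pow2: "(Suc t)^2 \<le> 4 * 2^t"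
proof (induction t)
  case (Suc t)
  have "Suc t < 2 ^ Suc t" by (rule less_exp)
  hence "2 * t + 3 \<le> 4 * 2 ^ t" by simp
  thus ?case using Suc.IH by (simp add: power2_eq_square)
qed simp

lemma orbit_len_fourth_power_sq_le:
  assumes q: "q \<ge> 2"
  shows "(orbit_len q ((Suc j)^4) 1)^2 \<le> 64 * Suc j"
proof -
  define K where "K = orbit_len q ((Suc j)^4) 1"
  have K1: "K \<ge> 1" unfolding K_def by (rule orbit_len_pos[OF q]) auto
  define t where "t = (K - 1) div 4"
  have "2 ^ (K - 1) \<le> q ^ (K - 1)" using q by (simp add: power_mono)
  also have "q ^ (K - 1) \<le> (Suc j)^4"
    using less_orbit_len_iff[OF q order_refl, of "K - 1" "(Suc j)^4"] K1 by (simp add: K_def)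
  finally have "(2 ^ t)^4 \<le> (Suc j)^4"
    by (rule order_trans[rotated]) (simp add: t_def power_mult[symmetric] power_increasing mult.commute)
  hence tj: "2 ^ t \<le> Suc j" using power_le_imp_le_base[of "2^t" 3 "Suc j"] by (simp add: numeral_eq_Suc)
  have "K \<le> 4 * Suc t" using K1 by (simp add: t_def)
  hence "K^2 \<le> (4 * Suc t)^2" by (rule power_mono) simp
  also have "\<dots> = 16 * (Suc t)^2" by (subst power_mult_distrib) simp
  also have "\<dots> \<le> 64 * Suc j" using Suc_sq_le_pow2[of t] tj by simp
  finally show ?thesis by (simp add: K_def)
qed

context orbit_product
begin

definition deviation_set :: "real \<Rightarrow> nat \<Rightarrow> (nat \<Rightarrow> nat) set" where
  "deviation_set e j = {x \<in> Sigma_sh m. e * real ((Suc j)^4)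
     \<le> \<bar>info_sum ((Suc j)^4) (prefix_word x ((Suc j)^4)) - mean_info ((Suc j)^4)\<bar>}"

lemma sets_deviation_set: "deviation_set e j \<in> sets P"
  unfolding deviation_set_def by (rule sets_P_prefix_set)

lemma measure_deviation_set_le:
  assumes e: "e > 0"
  shows "measure P (deviation_set e j) \<le> 274 / e^2 * inverse (real (Suc j)^2)"
proof -
  define n where "n = (Suc j)^4"
  have n: "real n = real (Suc j) * real (Suc j)^3" by (simp add: n_def power_Suc[symmetric])
  have "(orbit_len q n 1)^2 \<le> 64 * Suc j"
    unfolding n_def by (rule orbit_len_fourth_power_sq_le[OF q2])
  hence "real ((orbit_len q n 1)^2) \<le> real (64 * Suc j)" by (simp only: of_nat_le_iff)
  hence K: "4 * real ((orbit_len q n 1)^2) + 18 \<le> 274 * real (Suc j)" by simp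
  have "measure P (deviation_set e j) \<le> (\<Sum>i\<in>orbit_starts q n. ent2 (orbit_len q n i)) / (e * real n)^2"
    unfolding deviation_set_def n_def[symmetric] by (rule chebyshev_info_sum) (use e in \<open>simp add: n_def\<close>)
  also have "\<dots> \<le> real n * (274 * real (Suc j)) / (e * real n)^2"
    using order_trans[OF sum_ent2_orbit_len_le[of n] mult_left_mono[OF K]]
    by (intro divide_right_mono) auto
  also have "\<dots> = 274 / e^2 * inverse (real (Suc j)^3)"
  proof -
    have "real (Suc j) / real n = inverse (real (Suc j)^3)"
      unfolding n by (simp add: divide_inverse inverse_mult_distrib del: of_nat_Suc)
    moreover have "real n * (274 * real (Suc j)) / (e * real n)^2 = 274 / e^2 * (real (Suc j) / real n)"
      using e by (simp add: n_def field_simps power2_eq_square)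
    ultimately show ?thesis by simp
  qed
  also have "\<dots> \<le> 274 / e^2 * inverse (real (Suc j)^2)"
    using e by (intro mult_left_mono le_imp_inverse_le power_increasing) auto
  finally show ?thesis .
qed

lemma AE_eventually_not_deviation:
  "AE x in P. \<forall>l. eventually (\<lambda>j. x \<notin> deviation_set (1 / real (Suc l)) j) sequentially"
proof -
  interpret prob_space P by (rule probP)
  have "AE x in P. eventually (\<lambda>j. x \<in> space P - deviation_set (1 / real (Suc l)) j) sequentially" for l
  proof (rule borel_cantelli_AE1)
    have "summable (\<lambda>j. 274 / (1 / real (Suc l))^2 * inverse (real (Suc j) ^ 2))"
      using inverse_power_summable[of 2, THEN summable_Suc_iff[THEN iffD2]]
      by (intro summable_mult) (simp add: del: of_nat_Suc)
    thus "summable (\<lambda>j. measure P (deviation_set (1 / real (Suc l)) j))"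
      by (rule summable_comparison_test') (use measure_deviation_set_le in auto)
  qed (auto simp: sets_deviation_set emeasure_eq_measure)
  thus ?thesis by (simp add: AE_all_countable)
qed

lemma AE_info_sum_fourth_powers:
  "AE x in P. (\<lambda>j. info_sum ((Suc j)^4) (prefix_word x ((Suc j)^4)) / real ((Suc j)^4)) \<longlonglongrightarrow> rate"
  using AE_eventually_not_deviation
proof (rule AE_mp[OF _ AE_I2], intro impI)
  fix x assume x: "x \<in> space P" and ev: "\<forall>l. eventually (\<lambda>j. x \<notin> deviation_set (1 / real (Suc l)) j) sequentially"
  define D where "D j = (info_sum ((Suc j)^4) (prefix_word x ((Suc j)^4)) - mean_info ((Suc j)^4)) / real ((Suc j)^4)" for j
  have "D \<longlonglongrightarrow> 0"
    unfolding LIMSEQ_iff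
  proof (intro allI impI)
    fix r :: real assume "r > 0"
    then obtain l where l: "inverse (real (Suc l)) < r" using reals_Archimedean by blast
    have "eventually (\<lambda>j. \<bar>D j\<bar> < 1 / real (Suc l)) sequentially"
      using ev[rule_format, of l]
      by eventually_elim (use x space_P in \<open>auto simp: deviation_set_def D_def abs_div divide_less_eq\<close>)
    then obtain N where N: "\<forall>j\<ge>N. \<bar>D j\<bar> < 1 / real (Suc l)"
      by (auto simp: eventually_sequentially)
    have "1 / real (Suc l) < r" using l by (simp add: inverse_eq_divide)
    thus "\<exists>N. \<forall>j\<ge>N. norm (D j - 0) < r" using N by force
  qed
  moreover have "(\<lambda>j. mean_info ((Suc j)^4) / real ((Suc j)^4)) \<longlonglongrightarrow> rate"
    using LIMSEQ_subseq_LIMSEQ[OF mean_info_rate, of "\<lambda>j. (Suc j)^4"]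
    by (simp add: comp_def strict_mono_def power_strict_mono)
  ultimately show "(\<lambda>j. info_sum ((Suc j)^4) (prefix_word x ((Suc j)^4)) / real ((Suc j)^4)) \<longlonglongrightarrow> rate"
    using tendsto_add by (fastforce simp: D_def diff_divide_distrib)
qed

lemma AE_Pmass_prefix_pos: "AE x in P. \<forall>n. Pmass (prefix_word x n) > 0"
proof -
  interpret prob_space P by (rule probP)
  have "AE x in P. Pmass (prefix_word x n) > 0" for n
  proof (rule AE_I')
    let ?N = "{x \<in> Sigma_sh m. Pmass (prefix_word x n) = 0}"
    have "measure P ?N = 0" using measure_P_prefix_set[of "\<lambda>u. Pmass u = 0" n] by simp
    thus "?N \<in> null_sets P" using sets_P_prefix_set by (simp add: emeasure_eq_measure null_sets_def)
    show "{x \<in> space P. \<not> 0 < Pmass (prefix_word x n)} \<subseteq> ?N"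
      using space_P Pmass_nonneg by (auto simp: less_le)
  qed
  thus ?thesis by (simp add: AE_all_countable)
qed

lemma neg_log_Pmass_eq_info_sum:
  assumes u: "u \<in> words m n" and pos: "Pmass u > 0"
  shows "- log (real m) (Pmass u) = info_sum n u"
proof -
  have pr: "Pmass u = (\<Prod>i\<in>orbit_starts q n. mass (restrJ q i u))" by (rule Pmass_prod[OF u])
  have "mass (restrJ q i u) \<noteq> 0" if "i \<in> orbit_starts q n" for i
  proof
    assume "mass (restrJ q i u) = 0"
    hence "(\<Prod>i\<in>orbit_starts q n. mass (restrJ q i u)) = 0" using that by (intro prod_zero) auto
    thus False using pos pr by linarith
  qed
  hence "ln (Pmass u) = (\<Sum>i\<in>orbit_starts q n. ln (mass (restrJ q i u)))"
    unfolding pr by (intro ln_prod) (use mass_nonneg in \<open>auto simp: less_le\<close>)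
  thus ?thesis unfolding info_sum_def info_eq log_def by (simp add: sum_divide_distrib sum_negf)
qed

text \<open>\<open>-log\<^sub>m \<bbbP>[x\<^sub>1\<^sup>n]\<close> is monotone in \<open>n\<close>, so convergence along \<open>n = j\<^sup>4\<close> suffices.\<close>

theorem AE_information_rate:
  "AE x in P. (\<lambda>n. - log (real m) (Pmass (prefix_word x n)) / real n) \<longlonglongrightarrow> rate"
  using AE_info_sum_fourth_powers AE_Pmass_prefix_pos
proof (rule AE_mp[OF _ AE_mp[OF _ AE_I2]], intro impI)
  fix x assume x: "x \<in> space P" and pos: "\<forall>n. Pmass (prefix_word x n) > 0"
    and lim: "(\<lambda>j. info_sum ((Suc j)^4) (prefix_word x ((Suc j)^4)) / real ((Suc j)^4)) \<longlonglongrightarrow> rate"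
  have xs: "x \<in> Sigma_sh m" using x space_P by simp
  define f where "f n = - log (real m) (Pmass (prefix_word x n))" for n
  have "Pmass (prefix_word x (Suc n)) \<le> Pmass (prefix_word x n)" for n
    unfolding Pmass_def using cyl_prefix_word_mono[of n "Suc n"]
    by (intro finite_measure.finite_measure_mono[OF prob_space.finite_measure[OF probP]])
       (auto simp: setsP sets_cyl[OF m2])
  hence "incseq f" using pos m2 by (intro incseq_SucI) (simp add: f_def)
  moreover have "0 \<le> f n" for n
    using pos Pmass_le_1[of "prefix_word x n"] m2 by (simp add: f_def log_le_zero_cancel_iff)
  moreover have "(\<lambda>j. f ((Suc j)^4) / real ((Suc j)^4)) \<longlonglongrightarrow> rate"
    using lim by (simp add: f_def neg_log_Pmass_eq_info_sum[OF prefix_word_in_words[OF xs] pos[rule_format]])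
  ultimately show "(\<lambda>n. f n / real n) \<longlonglongrightarrow> rate"
    by (intro tendsto_div_of_mono_subseq[where nn = "\<lambda>j. (Suc j)^4"] fourth_power_ratio)
       (auto simp: strict_mono_def power_strict_mono)
qed

end

section \<open>Hausdorff measure on the shift space\<close>

lemma bdd_above_rho: "m \<ge> 2 \<Longrightarrow> bdd_above {rho m x y | x y. x \<in> A \<and> y \<in> A}"
  using rho_le_m by (auto intro!: bdd_aboveI[of _ "real m"])

lemma rho_le_sdiam: "m \<ge> 2 \<Longrightarrow> x \<in> A \<Longrightarrow> y \<in> A \<Longrightarrow> rho m x y \<le> sdiam m A"
  unfolding sdiam_def by (auto intro!: cSup_upper bdd_above_rho)

lemma sdiam_nonneg: "m \<ge> 2 \<Longrightarrow> 0 \<le> sdiam m A"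
proof (cases "A = {}")
  case False
  then obtain x where "x \<in> A" by blast
  moreover assume "m \<ge> 2"
  ultimately have "rho m x x \<le> sdiam m A" by (intro rho_le_sdiam)
  thus ?thesis by (simp add: rho_def)
qed (simp add: sdiam_def)

lemma sdiam_le:
  assumes "d \<ge> 0" and "\<And>x y. x \<in> A \<Longrightarrow> y \<in> A \<Longrightarrow> rho m x y \<le> d"
  shows "sdiam m A \<le> d"
proof (cases "A = {}")
  case False
  hence "{rho m x y |x y. x \<in> A \<and> y \<in> A} \<noteq> {}" by blast
  hence "Sup {rho m x y |x y. x \<in> A \<and> y \<in> A} \<le> d" by (rule cSup_least) (use assms in blast)
  thus ?thesis using False by (simp add: sdiam_def)
qed (use assms in \<open>simp add: sdiam_def\<close>)

lemma sdiam_cyl_le: "m \<ge> 2 \<Longrightarrow> sdiam m (cyl m u) \<le> real m powr (- real (length u))"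
  by (intro sdiam_le rho_le_if_agree) (auto simp: cyl_def)

lemma sdiam_empty [simp]: "sdiam m {} = 0"
  by (simp add: sdiam_def)

lemma powr_neg_mult_eq_power: "m \<ge> 2 \<Longrightarrow> real m powr (- real n * t) = (real m powr (- t)) ^ n"
  by (simp add: powr_realpow[symmetric] powr_powr mult.commute)

lemma cylinder_enumeration:
  fixes S :: "nat \<Rightarrow> nat list set"
  assumes S: "\<And>n. S n \<subseteq> words m n"
  obtains U :: "nat \<Rightarrow> (nat \<Rightarrow> nat) set" where
    "(\<Union>n. \<Union>u\<in>S n. cyl m u) \<subseteq> (\<Union>i. U i)"
    "\<And>i. U i = {} \<or> (\<exists>n u. u \<in> S n \<and> U i = cyl m u)"
    "\<And>g. g {} = 0 \<Longrightarrow> (\<Sum>i. g (U i) :: ennreal) = (\<Sum>n. \<Sum>u\<in>S n. g (cyl m u))"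
proof
  have fin: "finite (S n)" for n using S finite_words by (rule finite_subset)
  define E where "E n = (SOME xs. set xs = S n \<and> distinct xs)" for n
  have E: "set (E n) = S n \<and> distinct (E n)" for n
    unfolding E_def by (rule someI_ex) (use finite_distinct_list[OF fin] in blast)
  define V where "V n l = (if l < length (E n) then cyl m (E n ! l) else {})" for n l
  define U where "U i = (case prod_decode i of (n, l) \<Rightarrow> V n l)" for i
  show "(\<Union>n. \<Union>u\<in>S n. cyl m u) \<subseteq> (\<Union>i. U i)"
  proof
    fix x assume "x \<in> (\<Union>n. \<Union>u\<in>S n. cyl m u)"
    then obtain n u where u: "u \<in> S n" "x \<in> cyl m u" by blast
    then obtain l where "l < length (E n)" "E n ! l = u" using E[of n] by (metis in_set_conv_nth)
    hence "x \<in> U (prod_encode (n, l))" using u by (simp add: U_def V_def)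
    thus "x \<in> (\<Union>i. U i)" by blast
  qed
  show "U i = {} \<or> (\<exists>n u. u \<in> S n \<and> U i = cyl m u)" for i
  proof -
    obtain n l where i: "prod_decode i = (n, l)" by (cases "prod_decode i")
    show ?thesis
      using E[of n] nth_mem[of l "E n"] by (auto simp: U_def V_def i)
  qed
  fix g :: "(nat \<Rightarrow> nat) set \<Rightarrow> ennreal" assume g0: "g {} = 0"
  have "(\<Sum>l. g (V n l)) = (\<Sum>u\<in>S n. g (cyl m u))" for n
  proof -
    have "(\<Sum>l. g (V n l)) = (\<Sum>l<length (E n). g (cyl m (E n ! l)))"
      by (subst suminf_finite[of "{..<length (E n)}"]) (auto simp: V_def g0)
    also have "\<dots> = sum_list (map (\<lambda>u. g (cyl m u)) (E n))"
      by (simp add: sum_list_sum_nth atLeast0LessThan)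
    also have "\<dots> = (\<Sum>u\<in>S n. g (cyl m u))"
      using E by (simp add: sum_list_distinct_conv_sum_set)
    finally show ?thesis .
  qed
  hence "(\<Sum>i. (\<lambda>(n, l). g (V n l)) (prod_decode i)) = (\<Sum>n. \<Sum>u\<in>S n. g (cyl m u))"
    by (intro suminf_ennreal_2dimen) simp
  moreover have "(\<lambda>i. (\<lambda>(n, l). g (V n l)) (prod_decode i)) = (\<lambda>i. g (U i))"
    by (auto simp: U_def split: prod.splits)
  ultimately show "(\<Sum>i. g (U i)) = (\<Sum>n. \<Sum>u\<in>S n. g (cyl m u))" by simp
qed

definition hcontent :: "nat \<Rightarrow> real \<Rightarrow> real \<Rightarrow> (nat \<Rightarrow> nat) set \<Rightarrow> ennreal" where
  "hcontent m t \<delta> F = (INF U \<in> {U. F \<subseteq> (\<Union>i. U i) \<and> (\<forall>i. sdiam m (U i) \<le> \<delta>)}.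
     (\<Sum>i. ennreal (sdiam m (U i) powr t)))"

lemma hmeasure_eq_SUP_hcontent: "hmeasure m t F = (SUP \<delta>\<in>{0<..}. hcontent m t \<delta> F)"
  by (simp add: hmeasure_def hcontent_def)

lemma hcontent_le_cylinder_cover:
  assumes m: "m \<ge> 2" and t: "t > 0" and \<delta>: "real m powr (- real n0) \<le> \<delta>"
    and S: "\<And>n. S n \<subseteq> words m n" "\<And>n. n < n0 \<Longrightarrow> S n = {}" and F: "F \<subseteq> (\<Union>n. \<Union>u\<in>S n. cyl m u)"
  shows "hcontent m t \<delta> F \<le> (\<Sum>n. ennreal (real (card (S n)) * real m powr (- real n * t)))"
proof -
  obtain U where U: "(\<Union>n. \<Union>u\<in>S n. cyl m u) \<subseteq> (\<Union>i. U i)"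
    "\<And>i. U i = {} \<or> (\<exists>n u. u \<in> S n \<and> U i = cyl m u)"
    "\<And>g. g {} = 0 \<Longrightarrow> (\<Sum>i. g (U i) :: ennreal) = (\<Sum>n. \<Sum>u\<in>S n. g (cyl m u))"
    using cylinder_enumeration[OF S(1)] by blast
  have diam: "sdiam m (cyl m u) \<le> real m powr (- real n)" if "u \<in> S n" for n u
    using sdiam_cyl_le[OF m, of u] that S(1) by (auto simp: words_def)
  have "sdiam m (U i) \<le> \<delta>" for i
  proof (cases "U i = {}")
    case False
    then obtain n u where u: "u \<in> S n" "U i = cyl m u" using U(2) by blast
    hence "n0 \<le> n" using S(2)[of n] by (cases "n < n0") auto
    hence "real m powr (- real n) \<le> real m powr (- real n0)" using m by (intro powr_mono) auto
    thus ?thesis using diam[OF u(1)] \<delta> unfolding u(2) by linarith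
  qed (use order_trans[OF powr_ge_zero \<delta>] in simp)
  hence "hcontent m t \<delta> F \<le> (\<Sum>i. ennreal (sdiam m (U i) powr t))"
    unfolding hcontent_def using F U(1) by (intro INF_lower) auto
  also have "\<dots> = (\<Sum>n. \<Sum>u\<in>S n. ennreal (sdiam m (cyl m u) powr t))"
    by (rule U(3)) simp
  also have "\<dots> \<le> (\<Sum>n. ennreal (real (card (S n)) * real m powr (- real n * t)))"
  proof (intro suminf_le)
    fix n
    have "ennreal (sdiam m (cyl m u) powr t) \<le> ennreal (real m powr (- real n * t))" if "u \<in> S n" for u
    proof (rule ennreal_leI)
      have "sdiam m (cyl m u) powr t \<le> (real m powr (- real n)) powr t"
        using diam[OF that] sdiam_nonneg[OF m] t by (intro powr_mono2) auto
      thus "sdiam m (cyl m u) powr t \<le> real m powr (- real n * t)" by (simp add: powr_powr)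
    qed
    hence "(\<Sum>u\<in>S n. ennreal (sdiam m (cyl m u) powr t)) \<le> (\<Sum>u\<in>S n. ennreal (real m powr (- real n * t)))"
      by (rule sum_mono)
    thus "(\<Sum>u\<in>S n. ennreal (sdiam m (cyl m u) powr t))
        \<le> ennreal (real (card (S n)) * real m powr (- real n * t))"
      by (simp add: ennreal_of_nat_eq_real_of_nat ennreal_mult)
  qed auto
  finally show ?thesis .
qed

lemma hmeasure_eq_0_if_cylinder_covers:
  assumes m: "m \<ge> 2" and t: "t > 0"
    and cov: "\<And>\<eta> n0. \<eta> > 0 \<Longrightarrow> \<exists>S. (\<forall>n. S n \<subseteq> words m n) \<and> (\<forall>n<n0. S n = {}) \<and>
       F \<subseteq> (\<Union>n. \<Union>u\<in>S n. cyl m u) \<and>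
       summable (\<lambda>n. real (card (S n)) * real m powr (- real n * t)) \<and>
       (\<Sum>n. real (card (S n)) * real m powr (- real n * t)) \<le> \<eta>"
  shows "hmeasure m t F = 0"
proof -
  have "hcontent m t \<delta> F = 0" if \<delta>: "\<delta> > 0" for \<delta>
  proof (rule antisym[OF ennreal_le_epsilon zero_le])
    fix \<eta> :: real assume \<eta>: "\<eta> > 0"
    obtain n0 where n0: "real m powr (- real n0) \<le> \<delta>" using ex_powr_neg_le[OF m \<delta>] by blast
    obtain S where S: "\<And>n. S n \<subseteq> words m n" "\<And>n. n < n0 \<Longrightarrow> S n = {}"
      "F \<subseteq> (\<Union>n. \<Union>u\<in>S n. cyl m u)"
      "summable (\<lambda>n. real (card (S n)) * real m powr (- real n * t))"
      "(\<Sum>n. real (card (S n)) * real m powr (- real n * t)) \<le> \<eta>"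
      using cov[OF \<eta>, of n0] by blast
    have "hcontent m t \<delta> F \<le> (\<Sum>n. ennreal (real (card (S n)) * real m powr (- real n * t)))"
      by (rule hcontent_le_cylinder_cover[OF m t n0 S(1,2,3)])
    also have "\<dots> = ennreal (\<Sum>n. real (card (S n)) * real m powr (- real n * t))"
      by (rule suminf_ennreal2) (use S(4) in auto)
    also have "\<dots> \<le> 0 + ennreal \<eta>" using S(5) by (simp add: ennreal_leI)
    finally show "hcontent m t \<delta> F \<le> 0 + ennreal \<eta>" .
  qed
  thus ?thesis unfolding hmeasure_eq_SUP_hcontent by simp
qed

lemma ex_ge_power_le:
  fixes r :: real
  assumes "0 \<le> r" "r < 1" "\<eta> > 0"
  shows "\<exists>n\<ge>n0. r ^ n \<le> \<eta>"
proof -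
  have "(\<lambda>n. r ^ n) \<longlonglongrightarrow> 0" by (rule LIMSEQ_power_zero) (use assms in simp)
  hence "eventually (\<lambda>n. r ^ n < \<eta>) sequentially" using assms(3) by (rule order_tendstoD)
  then obtain N where "\<And>n. n \<ge> N \<Longrightarrow> r ^ n < \<eta>" by (auto simp: eventually_sequentially)
  thus ?thesis by (intro exI[of _ "max N n0"]) (simp add: less_imp_le)
qed

lemma geometric_tail:
  fixes r :: real
  assumes r: "0 \<le> r" "r < 1"
  shows "summable (\<lambda>n. if n1 \<le> n then r ^ n else 0)" "(\<Sum>n. if n1 \<le> n then r ^ n else 0) = r ^ n1 / (1 - r)"
proof -
  have g: "summable (\<lambda>n. r ^ n)" by (rule summable_geometric) (use r in simp)
  show s: "summable (\<lambda>n. if n1 \<le> n then r ^ n else 0)"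
    by (rule summable_comparison_test[OF _ g]) (use r in auto)
  have "(\<Sum>n. if n1 \<le> n then r ^ n else 0) = (\<Sum>n. r ^ n1 * r ^ n)"
    using suminf_split_initial_segment[OF s, of n1] by (simp add: power_add mult.commute)
  also have "\<dots> = r ^ n1 / (1 - r)" using suminf_mult[OF g] suminf_geometric[of r] r by simp
  finally show "(\<Sum>n. if n1 \<le> n then r ^ n else 0) = r ^ n1 / (1 - r)" .
qed

lemma hmeasure_2_eq_0:
  assumes m: "m \<ge> 2" and F: "F \<subseteq> Sigma_sh m"
  shows "hmeasure m 2 F = 0"
proof (rule hmeasure_eq_0_if_cylinder_covers[OF m])
  fix \<eta> :: real and n0 assume \<eta>: "\<eta> > 0"
  have r: "0 \<le> real m powr (-1)" "real m powr (-1) < 1" using m by (auto simp: powr_minus field_simps)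
  obtain n where n: "n \<ge> n0" "(real m powr (-1)) ^ n \<le> \<eta>" using ex_ge_power_le[OF r \<eta>] by blast
  define S where "S k = (if k = n then words m n else {})" for k
  have card_term: "real (card (S k)) * real m powr (- real k * 2) = (if k = n then (real m powr (-1)) ^ n else 0)" for k
  proof (cases "k = n")
    case True
    have "real (card (S k)) * real m powr (- real k * 2) = real m ^ n * real m powr (- real n * 2)"
      using True by (simp add: S_def card_words)
    also have "\<dots> = real m powr (- real n * 1)"
      using m by (simp add: powr_realpow[symmetric] powr_add[symmetric])
    also have "\<dots> = (real m powr (-1)) ^ n" by (rule powr_neg_mult_eq_power[OF m])
    finally show ?thesis using True by simp
  qed (simp add: S_def)
  show "\<exists>S. (\<forall>n. S n \<subseteq> words m n) \<and> (\<forall>n<n0. S n = {}) \<and> F \<subseteq> (\<Union>n. \<Union>u\<in>S n. cyl m u) \<and>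
       summable (\<lambda>n. real (card (S n)) * real m powr (- real n * 2)) \<and>
       (\<Sum>n. real (card (S n)) * real m powr (- real n * 2)) \<le> \<eta>"
  proof (intro exI[of _ S] conjI allI impI)
    show "F \<subseteq> (\<Union>n. \<Union>u\<in>S n. cyl m u)"
    proof
      fix x assume "x \<in> F"
      hence "x \<in> cyl m (prefix_word x n)" "prefix_word x n \<in> S n"
        using F in_cyl_prefix_word prefix_word_in_words by (auto simp: S_def)
      thus "x \<in> (\<Union>n. \<Union>u\<in>S n. cyl m u)" by blast
    qed
    show "summable (\<lambda>k. real (card (S k)) * real m powr (- real k * 2))"
      unfolding card_term by (rule summable_single)
    show "(\<Sum>k. real (card (S k)) * real m powr (- real k * 2)) \<le> \<eta>"
      unfolding card_term sums_single[THEN sums_unique, symmetric] using n(2) .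
  qed (use n in \<open>auto simp: S_def\<close>)
qed simp

lemma hmeasure_pos_if_mass_distribution:
  assumes m: "m \<ge> 2" and "finite_measure P"
    and A: "A \<in> sets P" "measure P A > 0" "A \<subseteq> B" and \<delta>: "\<delta> > 0" and M: "M > 0"
    and local: "\<And>U. sdiam m U \<le> \<delta> \<Longrightarrow> \<exists>C\<in>sets P. U \<inter> A \<subseteq> C \<and> measure P C \<le> M * sdiam m U powr t"
  shows "hmeasure m t B \<noteq> 0"
proof -
  interpret finite_measure P by fact
  define c where "c = measure P A"
  have "ennreal (c / M) \<le> (\<Sum>i. ennreal (sdiam m (U i) powr t))"
    if U: "B \<subseteq> (\<Union>i. U i)" "\<forall>i. sdiam m (U i) \<le> \<delta>" for U :: "nat \<Rightarrow> (nat \<Rightarrow> nat) set"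
  proof -
    have "\<forall>i. \<exists>C. C \<in> sets P \<and> U i \<inter> A \<subseteq> C \<and> measure P C \<le> M * sdiam m (U i) powr t"
      using local U(2) by blast
    then obtain C where C: "\<And>i. C i \<in> sets P" "\<And>i. U i \<inter> A \<subseteq> C i"
      "\<And>i. measure P (C i) \<le> M * sdiam m (U i) powr t"
      by (auto dest!: choice)
    have "ennreal c = emeasure P A" by (simp add: c_def emeasure_eq_measure)
    also have "\<dots> \<le> emeasure P (\<Union>i. C i)"
    proof (rule emeasure_mono)
      show "A \<subseteq> (\<Union>i. C i)" using A(3) U(1) C(2) by blast
    qed (use C(1) in blast)
    also have "\<dots> \<le> (\<Sum>i. emeasure P (C i))"
      using C by (intro emeasure_subadditive_countably) auto
    also have "\<dots> \<le> (\<Sum>i. ennreal M * ennreal (sdiam m (U i) powr t))"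
      using C(3) M by (intro suminf_le) (auto simp: emeasure_eq_measure ennreal_mult[symmetric] ennreal_leI)
    also have "\<dots> = ennreal M * (\<Sum>i. ennreal (sdiam m (U i) powr t))" by simp
    finally have "ennreal c \<le> ennreal M * (\<Sum>i. ennreal (sdiam m (U i) powr t))" .
    show ?thesis
    proof (cases "(\<Sum>i. ennreal (sdiam m (U i) powr t))" rule: ennreal_cases)
      case (real x)
      hence "c \<le> M * x" using \<open>ennreal c \<le> _\<close> M by (simp add: ennreal_mult[symmetric] ennreal_le_iff)
      hence "c / M \<le> x" using M by (simp add: divide_le_eq mult.commute)
      thus ?thesis using real by (simp add: ennreal_leI)
    qed simp
  qed
  hence "ennreal (c / M) \<le> hcontent m t \<delta> B"
    unfolding hcontent_def by (intro INF_greatest) blast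
  also have "\<dots> \<le> hmeasure m t B"
    unfolding hmeasure_eq_SUP_hcontent by (rule SUP_upper) (use \<delta> in simp)
  finally show ?thesis using A M by (auto simp: c_def)
qed

section \<open>The dimension of \<open>\<bbbP>\<^sub>\<mu>\<close>\<close>

lemma LIMSEQ_iff_inverse_Suc:
  fixes X :: "nat \<Rightarrow> real"
  shows "X \<longlonglongrightarrow> s \<longleftrightarrow> (\<forall>l. \<exists>N. \<forall>n. N \<le> n \<longrightarrow> \<bar>X n - s\<bar> < inverse (real (Suc l)))"
proof
  assume "X \<longlonglongrightarrow> s"
  hence "\<exists>N. \<forall>n\<ge>N. norm (X n - s) < inverse (real (Suc l))" for l
    unfolding LIMSEQ_iff by simp
  thus "\<forall>l. \<exists>N. \<forall>n. N \<le> n \<longrightarrow> \<bar>X n - s\<bar> < inverse (real (Suc l))" by simp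
next
  assume R: "\<forall>l. \<exists>N. \<forall>n. N \<le> n \<longrightarrow> \<bar>X n - s\<bar> < inverse (real (Suc l))"
  show "X \<longlonglongrightarrow> s" unfolding LIMSEQ_iff
  proof (intro allI impI)
    fix r :: real assume "r > 0"
    then obtain l where l: "inverse (real (Suc l)) < r" using reals_Archimedean by blast
    obtain N where "\<forall>n. N \<le> n \<longrightarrow> \<bar>X n - s\<bar> < inverse (real (Suc l))" using R by blast
    thus "\<exists>N. \<forall>n\<ge>N. norm (X n - s) < r" using l by (intro exI[of _ N]) auto
  qed
qed

text \<open>Choosing \<open>n = \<lfloor>-log\<^sub>m d\<rfloor>\<close> puts \<open>d\<close> between \<open>m\<^sup>-\<^sup>n\<^sup>-\<^sup>1\<close> and \<open>m\<^sup>-\<^sup>n\<close>.\<close>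

lemma ex_level_powr_le:
  assumes m: "m \<ge> 2" and d: "0 < d" "d \<le> real m powr (- real N)" and t: "0 < t" "t \<le> t'"
  obtains n where "N \<le> n" "d \<le> real m powr (- real n)"
    "real m powr (- real n * t') \<le> real m powr t' * d powr t"
proof
  define L where "L = - log (real m) d"
  define n where "n = nat \<lfloor>L\<rfloor>"
  have "log (real m) d \<le> log (real m) (real m powr (- real N))"
    using d m by (subst log_le_cancel_iff) auto
  hence "L \<ge> real N" using m by (simp add: L_def)
  hence nL: "real n \<le> L" "L < real n + 1" unfolding n_def by linarith+
  thus "N \<le> n" using \<open>L \<ge> real N\<close> unfolding n_def by linarith
  have dL: "d = real m powr (- L)" using d m by (simp add: L_def)
  thus "d \<le> real m powr (- real n)" using nL m by (simp add: powr_mono)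
  have "real m powr (- real n) \<le> real m powr (1 - L)" using nL m by simp
  also have "\<dots> = real m * d" using m by (simp add: dL powr_diff powr_minus divide_inverse)
  finally have "(real m powr (- real n)) powr t' \<le> (real m * d) powr t'"
    using t by (intro powr_mono2) auto
  also have "\<dots> = real m powr t' * d powr t'" using d by (simp add: powr_mult)
  also have "d powr t' \<le> d powr t"
  proof -
    have "real m powr (- real N) \<le> real m powr 0" by (rule powr_mono) (use m in auto)
    hence "d \<le> 1" using d(2) m by simp
    thus ?thesis using t d by (intro powr_mono') auto
  qed
  finally show "real m powr (- real n * t') \<le> real m powr t' * d powr t"
    using m by (simp add: powr_powr mult_left_mono)
qed

context orbit_product
begin

definition typical :: "(nat \<Rightarrow> nat) set" where
  "typical = {x \<in> Sigma_sh m. (\<forall>n. Pmass (prefix_word x n) > 0) \<and>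
      (\<lambda>n. - log (real m) (Pmass (prefix_word x n)) / real n) \<longlonglongrightarrow> rate}"

lemma sets_P_INT: "(\<And>n::nat. A n \<in> sets P) \<Longrightarrow> (\<Inter>n. A n) \<in> sets P"
proof -
  assume "\<And>n::nat. A n \<in> sets P"
  hence "(\<Inter>n\<in>UNIV. A n) \<in> sets P" by (intro sets.countable_INT) auto
  thus ?thesis by simp
qed

lemma sets_P_UN: "(\<And>n::nat. A n \<in> sets P) \<Longrightarrow> (\<Union>n. A n) \<in> sets P"
  by (rule sets.countable_UN) auto

lemma sets_typical: "typical \<in> sets P"
proof -
  define g where "g n u = - log (real m) (Pmass u) / real n" for n u
  define Pos where "Pos = (\<Inter>n. {x \<in> Sigma_sh m. Pmass (prefix_word x n) > 0})"
  define Lim where "Lim = (\<Inter>l. \<Union>N. \<Inter>n. {x \<in> Sigma_sh m.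
    N \<le> n \<longrightarrow> \<bar>g n (prefix_word x n) - rate\<bar> < inverse (real (Suc l))})"
  have "x \<in> typical \<longleftrightarrow> x \<in> Pos \<inter> Lim" for x
  proof (cases "x \<in> Sigma_sh m")
    case True
    have "x \<in> Lim \<longleftrightarrow> (\<lambda>n. g n (prefix_word x n)) \<longlonglongrightarrow> rate"
      unfolding Lim_def LIMSEQ_iff_inverse_Suc using True by simp
    thus ?thesis using True by (simp add: typical_def Pos_def g_def)
  qed (simp add: typical_def Pos_def)
  hence "typical = Pos \<inter> Lim" by blast
  also have "\<dots> \<in> sets P"
    unfolding Pos_def Lim_def by (intro sets.Int sets_P_INT sets_P_UN sets_P_prefix_set)
  finally show ?thesis .
qed

lemma emeasure_typical: "emeasure P typical = 1"
proof (rule prob_space.emeasure_eq_1_AE[OF probP sets_typical])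
  show "AE x in P. x \<in> typical"
    using AE_information_rate AE_Pmass_prefix_pos
    by (rule AE_mp[OF _ AE_mp[OF _ AE_I2]]) (auto simp: typical_def space_P)
qed

definition decay_set :: "real \<Rightarrow> nat \<Rightarrow> (nat \<Rightarrow> nat) set" where
  "decay_set t N = {x \<in> Sigma_sh m. \<forall>n\<ge>N. Pmass (prefix_word x n) \<le> real m powr (- real n * t)}"

lemma sets_decay_set: "decay_set t N \<in> sets P"
proof -
  have "decay_set t N = (\<Inter>n. {x \<in> Sigma_sh m. N \<le> n \<longrightarrow> Pmass (prefix_word x n) \<le> real m powr (- real n * t)})"
    unfolding decay_set_def by auto
  also have "\<dots> \<in> sets P" by (intro sets_P_INT sets_P_prefix_set)
  finally show ?thesis .
qed

lemma AE_in_decay_set: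
  assumes t: "t < rate"
  shows "AE x in P. x \<in> (\<Union>N. decay_set t N)"
  using AE_information_rate AE_Pmass_prefix_pos
proof (rule AE_mp[OF _ AE_mp[OF _ AE_I2]], intro impI)
  fix x assume x: "x \<in> space P" and pos: "\<forall>n. Pmass (prefix_word x n) > 0"
    and lim: "(\<lambda>n. - log (real m) (Pmass (prefix_word x n)) / real n) \<longlonglongrightarrow> rate"
  obtain N0 where N0: "\<And>n. n \<ge> N0 \<Longrightarrow> t < - log (real m) (Pmass (prefix_word x n)) / real n"
    using order_tendstoD(1)[OF lim t] by (auto simp: eventually_sequentially)
  have "Pmass (prefix_word x n) \<le> real m powr (- real n * t)" if n: "max N0 1 \<le> n" for n
  proof -
    have "real n > 0" "t < - log (real m) (Pmass (prefix_word x n)) / real n" using N0[of n] n by auto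
    hence "t * real n < - log (real m) (Pmass (prefix_word x n))" by (simp only: less_divide_eq)
    hence "real m powr (log (real m) (Pmass (prefix_word x n))) < real m powr (- real n * t)"
      using m2 by (simp add: mult.commute)
    thus ?thesis using pos m2 by simp
  qed
  hence "x \<in> decay_set t (max N0 1)" using x space_P by (simp add: decay_set_def)
  thus "x \<in> (\<Union>N. decay_set t N)" by blast
qed

lemma ex_decay_set_measure_pos:
  assumes A: "A \<in> sets P" "measure P A > 0" and t: "t < rate"
  obtains N where "measure P (A \<inter> decay_set t N) > 0"
proof (rule ccontr)
  interpret prob_space P by (rule probP)
  assume "\<not> thesis"
  hence "measure P (A \<inter> decay_set t N) \<le> 0" for N using that not_less by blast
  hence "measure P (A \<inter> decay_set t N) = 0" for N by (simp add: antisym)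
  hence "A \<inter> decay_set t N \<in> null_sets P" for N
    using A(1) sets_decay_set by (simp add: emeasure_eq_measure null_sets_def)
  hence "(\<Union>N. A \<inter> decay_set t N) \<in> null_sets P" by (rule null_sets_UN)
  moreover have "emeasure P A \<le> emeasure P (\<Union>N. A \<inter> decay_set t N)"
  proof (rule emeasure_mono_AE)
    show "AE x in P. x \<in> A \<longrightarrow> x \<in> (\<Union>N. A \<inter> decay_set t N)"
      using AE_in_decay_set[OF t] by (rule AE_mp) auto
    show "(\<Union>N. A \<inter> decay_set t N) \<in> sets P" using A(1) sets_decay_set by (intro sets_P_UN) auto
  qed
  ultimately show False using A(2) by (simp add: emeasure_eq_measure null_sets_def)
qed

lemma measure_le_if_subset_cyl_decay:
  assumes y: "y \<in> decay_set t N" and n: "N \<le> n"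
    and C: "C \<subseteq> cyl m (prefix_word y n)" "C \<in> sets P"
  shows "measure P C \<le> real m powr (- real n * t)"
proof -
  have "measure P C \<le> Pmass (prefix_word y n)" unfolding Pmass_def
    by (rule finite_measure.finite_measure_mono[OF prob_space.finite_measure[OF probP] C(1)])
       (simp add: setsP sets_cyl[OF m2])
  also have "\<dots> \<le> real m powr (- real n * t)" using y n by (simp add: decay_set_def)
  finally show ?thesis .
qed

text \<open>\<open>U\<close> need not be measurable; the witness is the intersection of the cylinders around a
  point of \<open>U \<inter> decay_set t' N\<close> that are at least as large as \<open>U\<close>.\<close>

lemma measure_cylinder_hull_le:
  assumes t: "0 < t" "t < t'" and U: "sdiam m U \<le> real m powr (- real N)"
  shows "\<exists>C\<in>sets P. U \<inter> decay_set t' N \<subseteq> C \<and> measure P C \<le> real m powr t' * sdiam m U powr t"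
proof (cases "U \<inter> decay_set t' N = {}")
  case False
  then obtain y where y: "y \<in> U" "y \<in> decay_set t' N" by blast
  define d where "d = sdiam m U"
  define Q where "Q = {n. N \<le> n \<and> d \<le> real m powr (- real n)}"
  define C where "C = (\<Inter>n\<in>Q. cyl m (prefix_word y n))"
  have "N \<in> Q" using U by (simp add: Q_def d_def)
  hence C_sets: "C \<in> sets P"
    unfolding C_def by (intro sets.countable_INT') (auto simp: setsP sets_cyl[OF m2])
  have "U \<inter> decay_set t' N \<subseteq> C"
  proof
    fix z assume z: "z \<in> U \<inter> decay_set t' N"
    have yz: "y \<in> Sigma_sh m" "z \<in> Sigma_sh m" using y z by (auto simp: decay_set_def)
    have "rho m y z \<le> d" unfolding d_def using y z by (intro rho_le_sdiam[OF m2]) auto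
    hence "z \<in> cyl m (prefix_word y n)" if "n \<in> Q" for n
      using that in_cyl_prefix_word_if_rho_le[OF m2 yz] by (simp add: Q_def)
    thus "z \<in> C" by (simp add: C_def)
  qed
  moreover have bound: "measure P C \<le> real m powr (- real n * t')" if "n \<in> Q" for n
  proof (rule measure_le_if_subset_cyl_decay[OF y(2) _ _ C_sets])
    show "N \<le> n" using that by (simp add: Q_def)
    show "C \<subseteq> cyl m (prefix_word y n)" using that by (auto simp: C_def)
  qed
  have "measure P C \<le> real m powr t' * d powr t"
  proof (cases "d = 0")
    case True
    have "(\<lambda>n. (real m powr (- t')) ^ n) \<longlonglongrightarrow> 0"
      by (rule LIMSEQ_power_zero) (use m2 t in \<open>auto intro!: powr_less_one\<close>)
    moreover have "\<forall>n\<ge>N. measure P C \<le> (real m powr (- t')) ^ n"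
      using bound True powr_neg_mult_eq_power[OF m2] by (simp add: Q_def)
    ultimately have "measure P C \<le> 0" by (intro LIMSEQ_le_const) auto
    thus ?thesis using True t by simp
  next
    case False
    hence "0 < d" using sdiam_nonneg[OF m2] by (simp add: d_def less_le)
    then obtain n where "N \<le> n" "d \<le> real m powr (- real n)"
      "real m powr (- real n * t') \<le> real m powr t' * d powr t"
      using ex_level_powr_le[OF m2 _ U[folded d_def] t(1)] t(2) by (metis less_imp_le)
    thus ?thesis using bound[of n] by (simp add: Q_def)
  qed
  ultimately show ?thesis using C_sets unfolding d_def by blast
next
  case True
  thus ?thesis using sdiam_nonneg[OF m2, of U] by (intro bexI[of _ "{}"]) auto
qed

lemma hmeasure_ne_0:
  assumes A: "A \<in> sets P" "measure P A > 0" "A \<subseteq> B" and t: "0 < t" "t < rate"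
  shows "hmeasure m t B \<noteq> 0"
proof -
  define t' where "t' = (t + rate) / 2"
  have t': "t < t'" "t' < rate" using t by (auto simp: t'_def)
  obtain N where N: "measure P (A \<inter> decay_set t' N) > 0"
    using ex_decay_set_measure_pos[OF A(1,2) t'(2)] by blast
  show ?thesis
  proof (rule hmeasure_pos_if_mass_distribution[OF m2 prob_space.finite_measure[OF probP] _ N])
    fix U assume "sdiam m U \<le> real m powr (- real N)"
    then obtain C where "C \<in> sets P" "U \<inter> decay_set t' N \<subseteq> C"
      "measure P C \<le> real m powr t' * sdiam m U powr t"
      using measure_cylinder_hull_le[OF t(1) t'(1)] by blast
    thus "\<exists>C\<in>sets P. U \<inter> (A \<inter> decay_set t' N) \<subseteq> C \<and> measure P C \<le> real m powr t' * sdiam m U powr t"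
      by blast
  next
    show "A \<inter> decay_set t' N \<in> sets P" using A(1) sets_decay_set by blast
    show "A \<inter> decay_set t' N \<subseteq> B" using A(3) by blast
    show "real m powr (- real N) > 0" "real m powr t' > 0" using m2 by simp_all
  qed
qed

definition heavy_words :: "real \<Rightarrow> nat \<Rightarrow> nat list set" where
  "heavy_words a n = {u\<in>words m n. real m powr (- real n * a) \<le> Pmass u}"

lemma card_heavy_words_le: "real (card (heavy_words a n)) \<le> real m powr (real n * a)"
proof -
  have "real (card (heavy_words a n)) * real m powr (- real n * a)
      = (\<Sum>u\<in>heavy_words a n. real m powr (- real n * a))" by simp
  also have "\<dots> \<le> (\<Sum>u\<in>heavy_words a n. Pmass u)" by (rule sum_mono) (simp add: heavy_words_def)
  also have "\<dots> \<le> (\<Sum>u\<in>words m n. Pmass u)"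
    by (rule sum_mono2[OF finite_words]) (auto simp: heavy_words_def Pmass_nonneg)
  finally have "real (card (heavy_words a n)) * real m powr (- real n * a) \<le> 1" by (simp add: sum_Pmass)
  hence "real (card (heavy_words a n)) * real m powr (- real n * a) * real m powr (real n * a)
      \<le> 1 * real m powr (real n * a)"
    by (rule mult_right_mono) simp
  moreover have "real m powr (- real n * a) * real m powr (real n * a) = 1"
    using m2 by (simp add: powr_add[symmetric])
  ultimately show ?thesis by (simp add: mult.assoc)
qed

lemma typical_subset_heavy_cylinders:
  assumes a: "rate < a"
  shows "typical \<subseteq> (\<Union>n\<in>{n1..}. \<Union>u\<in>heavy_words a n. cyl m u)"
proof
  fix x assume "x \<in> typical"
  hence x: "x \<in> Sigma_sh m" and pos: "\<And>n. Pmass (prefix_word x n) > 0"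
    and lim: "(\<lambda>n. - log (real m) (Pmass (prefix_word x n)) / real n) \<longlonglongrightarrow> rate"
    by (auto simp: typical_def)
  obtain N where N: "\<And>n. n \<ge> N \<Longrightarrow> - log (real m) (Pmass (prefix_word x n)) / real n < a"
    using order_tendstoD(2)[OF lim a] by (auto simp: eventually_sequentially)
  define n where "n = max N (max n1 1)"
  have n: "N \<le> n" "n1 \<le> n" "real n > 0" by (auto simp: n_def)
  have "- log (real m) (Pmass (prefix_word x n)) < a * real n"
    using N[OF n(1)] n(3) by (simp only: divide_less_eq)
  hence "real m powr (- real n * a) < real m powr (log (real m) (Pmass (prefix_word x n)))"
    using m2 by (simp add: mult.commute)
  hence "prefix_word x n \<in> heavy_words a n"
    using pos[of n] m2 prefix_word_in_words[OF x] by (simp add: heavy_words_def)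
  thus "x \<in> (\<Union>n\<in>{n1..}. \<Union>u\<in>heavy_words a n. cyl m u)"
    using in_cyl_prefix_word[OF x, of n] n(2) by blast
qed

lemma hmeasure_typical_eq_0:
  assumes t: "t > rate"
  shows "hmeasure m t typical = 0"
proof -
  define \<epsilon> where "\<epsilon> = (t - rate) / 2"
  define r where "r = real m powr (- \<epsilon>)"
  have \<epsilon>: "\<epsilon> > 0" and r: "0 \<le> r" "r < 1" using t m2 by (auto simp: \<epsilon>_def r_def intro!: powr_less_one)
  show ?thesis
  proof (rule hmeasure_eq_0_if_cylinder_covers[OF m2])
    fix \<eta> :: real and n0 assume \<eta>: "\<eta> > 0"
    obtain n1 where n1: "n1 \<ge> n0" "r ^ n1 \<le> \<eta> * (1 - r)"
      using ex_ge_power_le[OF r, of "\<eta> * (1 - r)" n0] \<eta> r by auto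
    define S where "S n = (if n1 \<le> n then heavy_words (rate + \<epsilon>) n else {})" for n
    have term_le: "real (card (S n)) * real m powr (- real n * t) \<le> (if n1 \<le> n then r ^ n else 0)" for n
    proof (cases "n1 \<le> n")
      case True
      have "real (card (S n)) * real m powr (- real n * t)
          \<le> real m powr (real n * (rate + \<epsilon>)) * real m powr (- real n * t)"
        using card_heavy_words_le True by (intro mult_right_mono) (simp_all add: S_def)
      also have "\<dots> = real m powr (- real n * \<epsilon>)"
      proof -
        have "real n * (rate + \<epsilon>) + - real n * t = - real n * \<epsilon>" by (simp add: \<epsilon>_def field_simps)
        thus ?thesis by (simp only: powr_add[symmetric])
      qed
      also have "\<dots> = r ^ n" unfolding r_def by (rule powr_neg_mult_eq_power[OF m2])
      finally show ?thesis using True by simp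
    qed (simp add: S_def)
    have summ: "summable (\<lambda>n. real (card (S n)) * real m powr (- real n * t))"
      by (rule summable_comparison_test[OF _ geometric_tail(1)[OF r, of n1]])
         (use term_le r in \<open>auto intro!: exI[of _ 0]\<close>)
    have "(\<Sum>n. real (card (S n)) * real m powr (- real n * t)) \<le> r ^ n1 / (1 - r)"
      using suminf_le[OF term_le summ geometric_tail(1)[OF r]] geometric_tail(2)[OF r] by simp
    also have "\<dots> \<le> \<eta>" using n1 r by (simp add: divide_le_eq)
    finally have sum_le: "(\<Sum>n. real (card (S n)) * real m powr (- real n * t)) \<le> \<eta>" .
    have "typical \<subseteq> (\<Union>n\<in>{n1..}. \<Union>u\<in>heavy_words (rate + \<epsilon>) n. cyl m u)"
      using typical_subset_heavy_cylinders \<epsilon> by simp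
    also have "\<dots> \<subseteq> (\<Union>n. \<Union>u\<in>S n. cyl m u)" by (intro UN_mono) (auto simp: S_def)
    finally have "typical \<subseteq> (\<Union>n. \<Union>u\<in>S n. cyl m u)" .
    moreover have "\<forall>n. S n \<subseteq> words m n" "\<forall>n<n0. S n = {}" using n1 by (auto simp: S_def heavy_words_def)
    ultimately show "\<exists>S. (\<forall>n. S n \<subseteq> words m n) \<and> (\<forall>n<n0. S n = {}) \<and> typical \<subseteq> (\<Union>n. \<Union>u\<in>S n. cyl m u) \<and>
       summable (\<lambda>n. real (card (S n)) * real m powr (- real n * t)) \<and>
       (\<Sum>n. real (card (S n)) * real m powr (- real n * t)) \<le> \<eta>"
      using summ sum_le by blast
  next
    show "t > 0" using t rate_nonneg by linarith
  qed
qed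

lemma rate_le_dimH:
  assumes A: "A \<in> sets P" "measure P A > 0" "A \<subseteq> B" and B: "B \<subseteq> Sigma_sh m"
  shows "rate \<le> dimH m B"
  unfolding dimH_def
proof (rule cInf_greatest)
  show "{s. 0 < s \<and> hmeasure m s B = 0} \<noteq> {}"
    using hmeasure_2_eq_0[OF m2 B] by (intro ex_in_conv[THEN iffD1] exI[of _ 2]) simp
  show "rate \<le> t" if "t \<in> {s. 0 < s \<and> hmeasure m s B = 0}" for t
  proof (rule ccontr)
    assume "\<not> rate \<le> t"
    hence "hmeasure m t B \<noteq> 0" using hmeasure_ne_0[OF A, of t] that by simp
    thus False using that by simp
  qed
qed

lemma dimH_typical_le: "dimH m typical \<le> rate"
  unfolding dimH_def
proof (rule dense_ge)
  fix t assume t: "rate < t"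
  hence "t \<in> {s. 0 < s \<and> hmeasure m s typical = 0}"
    using hmeasure_typical_eq_0 rate_nonneg by simp
  thus "Inf {s. 0 < s \<and> hmeasure m s typical = 0} \<le> t"
    by (rule cInf_lower) (auto intro!: bdd_belowI[of _ 0])
qed

theorem dimH_measure_eq_rate: "dimH_measure m P = rate"
proof -
  define D where "D = {dimH m F |F. F \<in> sets (borel_Sigma m) \<and> emeasure P F = 1}"
  have typical: "dimH m typical \<in> D"
    unfolding D_def using sets_typical emeasure_typical setsP by auto
  have lower: "rate \<le> d" if dD: "d \<in> D" for d
  proof -
    obtain F where F: "d = dimH m F" "F \<in> sets P" "emeasure P F = 1"
      using dD setsP unfolding D_def by auto
    have "measure P F = 1" using F(3) finite_measure.emeasure_eq_measure[OF prob_space.finite_measure[OF probP]] by simp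
    moreover have "F \<subseteq> Sigma_sh m" using sets.sets_into_space[OF F(2)] space_P by simp
    ultimately show ?thesis using rate_le_dimH[OF F(2) _ order_refl] F(1) by simp
  qed
  have "Inf D \<le> dimH m typical" by (rule cInf_lower[OF typical]) (use lower in \<open>auto intro!: bdd_belowI\<close>)
  hence "Inf D \<le> rate" using dimH_typical_le by linarith
  moreover have "rate \<le> Inf D" using typical lower by (intro cInf_greatest) auto
  ultimately show ?thesis unfolding dimH_measure_def D_def[symmetric] by simp
qed

end

section \<open>The rate is \<open>s(\<Omega>, \<mu>)\<close> and \<open>\<bbbP>\<^sub>\<mu>\<close> lives on \<open>X\<^sub>\<Omega>\<close>\<close>

lemma ex_cyl_disjoint_if_notin_closed:
  assumes m: "m \<ge> 2" and \<Omega>: "Sclosed m \<Omega>" and y: "y \<in> Sigma_sh m" "y \<notin> \<Omega>"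
  obtains r where "\<Omega> \<inter> cyl m (prefix_word y r) = {}"
proof -
  obtain e where e: "e > 0" "\<And>z. z \<in> Sigma_sh m \<Longrightarrow> rho m y z < e \<Longrightarrow> z \<notin> \<Omega>"
    using \<Omega> y unfolding Sclosed_def Sopen_def by blast
  obtain r where r: "real m powr (- real r) \<le> e / 2" using ex_powr_neg_le[OF m, of "e / 2"] e by auto
  have "z \<notin> \<Omega>" if z: "z \<in> cyl m (prefix_word y r)" for z
  proof -
    have zs: "z \<in> Sigma_sh m" using z by (simp add: cyl_def)
    have "\<forall>j\<in>{1..r}. y j = z j" using z by (auto simp: cyl_def nth_prefix_word)
    hence "rho m y z \<le> real m powr (- real r)" by (rule rho_le_if_agree[OF m y(1) zs])
    thus ?thesis using r e zs by simp
  qed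
  thus ?thesis using that by blast
qed

lemma take_restrJ_prefix_word:
  fixes x :: "nat \<Rightarrow> nat"
  assumes q: "q \<ge> 2" and i: "i \<ge> 1"
  defines "y \<equiv> \<lambda>l. if l = 0 then 0 else x (i * q ^ (l - 1))"
  shows "r \<le> length (restrJ q i (prefix_word x (i * q ^ r)))"
    "take r (restrJ q i (prefix_word x (i * q ^ r))) = prefix_word y r"
proof -
  define n where "n = i * q ^ r"
  have K: "k < orbit_len q n i \<longleftrightarrow> q ^ k * i \<le> n" for k by (rule less_orbit_len_iff[OF q i])
  have rK: "r < orbit_len q n i" using K by (simp add: n_def mult.commute)
  thus "r \<le> length (restrJ q i (prefix_word x (i * q ^ r)))"
    by (simp add: n_def length_restrJ[OF q i])
  have "restrJ q i (prefix_word x n) ! k = y (Suc k)" if "k < r" for k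
  proof -
    have "q ^ k * i \<le> n" "q ^ k * i \<ge> 1" using that rK K[of k] q i by auto
    hence "q ^ k * i - 1 < n" "q ^ k * i - 1 + 1 = q ^ k * i" by linarith+
    hence "prefix_word x n ! (q ^ k * i - 1) = x (q ^ k * i)" by (metis nth_prefix_word)
    thus ?thesis using that rK by (simp add: restrJ_eq_map[OF q i] y_def mult.commute)
  qed
  thus "take r (restrJ q i (prefix_word x (i * q ^ r))) = prefix_word y r"
    using rK by (intro nth_equalityI) (auto simp: n_def length_restrJ[OF q i] nth_prefix_word)
qed

locale orbit_product_Omega = orbit_product +
  fixes \<Omega> :: "(nat \<Rightarrow> nat) set"
  assumes \<Omega>_closed: "Sclosed m \<Omega>" and \<mu>_\<Omega>: "emeasure \<mu> \<Omega> = 1"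
begin

lemma sets_\<mu>_\<Omega>: "\<Omega> \<in> sets \<mu>"
proof -
  have "Sigma_sh m - \<Omega> \<in> sets (borel_Sigma m)"
    using \<Omega>_closed by (intro Sopen_in_sets_borel_Sigma) (simp add: Sclosed_def)
  hence "Sigma_sh m - (Sigma_sh m - \<Omega>) \<in> sets (borel_Sigma m)"
    using sets.compl_sets[of _ "borel_Sigma m"] by simp
  moreover have "Sigma_sh m - (Sigma_sh m - \<Omega>) = \<Omega>" using \<Omega>_closed by (auto simp: Sclosed_def)
  ultimately show ?thesis using sets\<mu> by simp
qed

lemma measure_\<Omega>_Int_cyl: "measure \<mu> (\<Omega> \<inter> cyl m v) = mass v"
proof -
  interpret prob_space \<mu> by (rule prob\<mu>)
  have space: "space \<mu> = Sigma_sh m" using sets_eq_imp_space_eq[OF sets\<mu>] by simp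
  have "prob (space \<mu> - \<Omega>) = 0"
    using prob_compl[OF sets_\<mu>_\<Omega>] \<mu>_\<Omega> by (simp add: emeasure_eq_measure)
  moreover have "space \<mu> - \<Omega> \<in> sets \<mu>" using sets_\<mu>_\<Omega> by auto
  ultimately have "Sigma_sh m - \<Omega> \<in> null_sets \<mu>"
    using space by (simp add: emeasure_eq_measure null_sets_def)
  moreover have "cyl m v - (Sigma_sh m - \<Omega>) = \<Omega> \<inter> cyl m v" using cyl_subset by blast
  moreover have "cyl m v \<in> sets \<mu>" using sets_cyl[OF m2] sets\<mu> by simp
  ultimately show ?thesis by (metis measure_Diff_null_set mass_def)
qed

lemma ent_eq_entropy_m: "ent k = entropy_m m \<mu> (alpha m \<Omega> k)"
proof -
  define S where "S = {u\<in>words m k. \<Omega> \<inter> cyl m u \<noteq> {}}"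
  have alpha: "alpha m \<Omega> k = (\<lambda>u. \<Omega> \<inter> cyl m u) ` S"
    unfolding alpha_def S_def by auto
  have "inj_on (\<lambda>u. \<Omega> \<inter> cyl m u) S"
    using cyl_disjoint[of _ m k] by (fastforce simp: inj_on_def S_def)
  hence "entropy_m m \<mu> (alpha m \<Omega> k) = - (\<Sum>u\<in>S. if measure \<mu> (\<Omega> \<inter> cyl m u) = 0 then 0
      else measure \<mu> (\<Omega> \<inter> cyl m u) * log (real m) (measure \<mu> (\<Omega> \<inter> cyl m u)))"
    unfolding entropy_m_def alpha by (simp add: sum.reindex)
  also have "\<dots> = (\<Sum>u\<in>S. mass u * info u)"
    unfolding measure_\<Omega>_Int_cyl sum_negf[symmetric] by (rule sum.cong) (auto simp: info_def)
  also have "\<dots> = ent k" unfolding ent_def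
    by (rule sum.mono_neutral_left[OF finite_words]) (auto simp: S_def simp flip: measure_\<Omega>_Int_cyl)
  finally show ?thesis by simp
qed

lemma s_val_eq_rate: "s_val m q \<Omega> \<mu> = rate"
  unfolding s_val_def rate_def by (simp add: ent_eq_entropy_m)

text \<open>If the \<open>J\<^sub>i\<close>-subsequence \<open>y\<close> of \<open>x\<close> left \<open>\<Omega>\<close>, a cylinder around \<open>y\<close> would be
  \<open>\<mu>\<close>-null, and so would the cylinder \<open>[x\<^sub>1\<^sup>n]\<close> for \<open>n = i q\<^sup>r\<close>.\<close>

lemma typical_subset_X_Omega: "typical \<subseteq> X_Omega m q \<Omega>"
proof
  fix x assume "x \<in> typical"
  hence x: "x \<in> Sigma_sh m" and pos: "\<And>n. Pmass (prefix_word x n) > 0" by (auto simp: typical_def)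
  have "(\<lambda>l. if l = 0 then 0 else x (i * q ^ (l - 1))) \<in> \<Omega>" if i: "1 \<le> i" "\<not> q dvd i" for i
  proof (rule ccontr)
    define y where "y = (\<lambda>l. if l = 0 then 0 else x (i * q ^ (l - 1)))"
    assume "y \<notin> \<Omega>"
    moreover have "y \<in> Sigma_sh m" using x by (auto simp: y_def Sigma_sh_def)
    ultimately obtain r where r: "\<Omega> \<inter> cyl m (prefix_word y r) = {}"
      using ex_cyl_disjoint_if_notin_closed[OF m2 \<Omega>_closed] by blast
    define n where "n = i * q ^ r"
    note take = take_restrJ_prefix_word[OF q2 i(1), where x=x and r=r, folded y_def n_def]
    have "mass (restrJ q i (prefix_word x n)) \<le> mass (prefix_word y r)"
      unfolding mass_def using take cyl_mono_take[of "prefix_word y r" _ m]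
      by (intro finite_measure.finite_measure_mono[OF prob_space.finite_measure[OF prob\<mu>]])
         (auto simp: sets\<mu> sets_cyl[OF m2])
    also have "\<dots> = 0" using r measure_\<Omega>_Int_cyl[of "prefix_word y r"] by simp
    finally have "mass (restrJ q i (prefix_word x n)) = 0" using mass_nonneg antisym by blast
    moreover have "i \<in> orbit_starts q n"
      using i q2 by (auto simp: orbit_starts_def n_def)
    ultimately have "(\<Prod>j\<in>orbit_starts q n. mass (restrJ q j (prefix_word x n))) = 0"
      by (intro prod_zero) auto
    hence "Pmass (prefix_word x n) = 0" using Pmass_prod[OF prefix_word_in_words[OF x]] by simp
    thus False using pos[of n] by simp
  qed
  thus "x \<in> X_Omega m q \<Omega>" using x by (simp add: X_Omega_def)
qed

lemma s_val_le_dimH_X_Omega: "s_val m q \<Omega> \<mu> \<le> dimH m (X_Omega m q \<Omega>)"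
proof -
  have "measure P typical = 1"
    using emeasure_typical finite_measure.emeasure_eq_measure[OF prob_space.finite_measure[OF probP]]
    by simp
  hence "rate \<le> dimH m (X_Omega m q \<Omega>)"
    by (intro rate_le_dimH[OF sets_typical _ typical_subset_X_Omega]) (auto simp: X_Omega_def)
  thus ?thesis by (simp add: s_val_eq_rate)
qed

end

theorem proposition2p3:
  fixes m q :: nat and \<Omega> :: "(nat \<Rightarrow> nat) set"
    and \<mu> P :: "(nat \<Rightarrow> nat) measure"
  assumes "m \<ge> 2" and "q \<ge> 2"
    and "\<Omega> \<noteq> {}" and "Sclosed m \<Omega>"
    and "prob_space \<mu>" and "sets \<mu> = sets (borel_Sigma m)" and "emeasure \<mu> \<Omega> = 1"
    and "prob_space P" and "sets P = sets (borel_Sigma m)"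
    and "\<And>u. u \<in> words m (length u) \<Longrightarrow>
           measure P (cyl m u) =
             (\<Prod>i\<in>{i\<in>{1..length u}. \<not> q dvd i}. measure \<mu> (cyl m (restrJ q i u)))"
  shows "(AE x in P. (\<lambda>n. - log (real m) (measure P (cyl m (prefix_word x n))) / real n)
            \<longlonglongrightarrow> s_val m q \<Omega> \<mu>) \<and>
         dimH_measure m P = s_val m q \<Omega> \<mu> \<and>
         dimH m (X_Omega m q \<Omega>) \<ge> s_val m q \<Omega> \<mu>"
proof -
  interpret orbit_product_Omega m q \<mu> P \<Omega>
    by (intro orbit_product_Omega.intro orbit_product.intro orbit_product_Omega_axioms.intro)
       (fact assms)+
  show ?thesis
    using AE_information_rate dimH_measure_eq_rate s_val_le_dimH_X_Omega
    by (simp add: s_val_eq_rate Pmass_def)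
qed

end
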